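(* There is an absolute constant $K$ such that for all positive integers $s$ and all integers $k$ with $0<k<s/2$, $$\sup_{x\in\mathbb{R}}\left|P\left(\frac{X_{s,k}-\mu_k}{\sigma_k}\le x\right)-\Phi(x)\right| \le \frac{12^{3/2}K(s-k)^{5/2}}{(k(s-2k))^{3/2}},$$ where $X_{s,k}$ is the size of a uniformly random $(s,s+1)$-core with exactly $k$ distinct parts, $\mu_k,\sigma_k^2$ are its mean and variance, and $\Phi$ is the standard normal distribution function. Hence the distribution of $(X_{s,k}-\mu_k)/\sigma_k$ tends to the standard normal distribution if $s\to\infty$ and both $ks^{-2/3}\to\infty$ and $(s-2k)s^{-2/3}\to\infty$.
   Context: A partition $\lambda=(\lambda_1\ge\dots\ge\lambda_k>0)$ has size $\sum\lambda_i$ and $k$ parts; it has distinct parts if $\lambda_1>\dots>\lambda_k$. The hook length of a cell in the Ferrers diagram is (cells strictly right in its row) + (cells strictly above in its column) + 1. A partition is an $s$-core if no cell has hook length $s$; an $(s,s+1)$-core is both an $s$-core and an $(s+1)$-core. For $0<k<s/2$ the set of $(s,s+1)$-cores with exactly $k$ distinct parts is finite and nonempty, and $X_{s,k}$ is the size of one chosen uniformly from it. *)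

theory Defs
  imports "HOL-Probability.Probability"
begin

definition is_partition :: "nat list \<Rightarrow> bool" where
  "is_partition lam \<longleftrightarrow> sorted_wrt (\<ge>) lam \<and> (\<forall>p\<in>set lam. 0 < p)"

definition distinct_parts :: "nat list \<Rightarrow> bool" where
  "distinct_parts lam \<longleftrightarrow> is_partition lam \<and> sorted_wrt (>) lam"

definition psize :: "nat list \<Rightarrow> nat" where
  "psize lam = sum_list lam"

definition cells :: "nat list \<Rightarrow> (nat \<times> nat) set" where
  "cells lam = {(i, j). i < length lam \<and> j < lam ! i}"

definition hook :: "nat list \<Rightarrow> nat \<Rightarrow> nat \<Rightarrow> nat" where
  "hook lam i j = (lam ! i - j - 1) + card {i'. i < i' \<and> i' < length lam \<and> j < lam ! i'} + 1"

definition is_core :: "nat \<Rightarrow> nat list \<Rightarrow> bool" where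
  "is_core s lam \<longleftrightarrow> is_partition lam \<and> (\<forall>(i, j)\<in>cells lam. hook lam i j \<noteq> s)"

definition cores_dp :: "nat \<Rightarrow> nat \<Rightarrow> nat list set" where
  "cores_dp s k = {lam. is_core s lam \<and> is_core (s + 1) lam \<and> distinct_parts lam \<and> length lam = k}"

definition mu :: "nat \<Rightarrow> nat \<Rightarrow> real" where
  "mu s k = (\<Sum>lam\<in>cores_dp s k. real (psize lam)) / real (card (cores_dp s k))"

definition var :: "nat \<Rightarrow> nat \<Rightarrow> real" where
  "var s k = (\<Sum>lam\<in>cores_dp s k. (real (psize lam) - mu s k)\<^sup>2) / real (card (cores_dp s k))"

definition sigma :: "nat \<Rightarrow> nat \<Rightarrow> real" where
  "sigma s k = sqrt (var s k)"

definition std_cdf :: "nat \<Rightarrow> nat \<Rightarrow> real \<Rightarrow> real" where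
  "std_cdf s k x = real (card {lam\<in>cores_dp s k. (real (psize lam) - mu s k) / sigma s k \<le> x})
                   / real (card (cores_dp s k))"

definition Phi :: "real \<Rightarrow> real" where
  "Phi x = measure (density lborel std_normal_density) {..x}"

end

(* A partition into k distinct parts is an (s, s+1)-core exactly when its largest part is at
   most s - k: the hook lengths of its first row descend from lambda_1 + k - 1 to 1 in steps of at
   most 2, so they cannot skip both s and s + 1.  Via their sets of parts, these cores are thus
   the k-subsets of {1, ..., n} with n = s - k, and X_{s,k} is the sum of a uniformly random
   k-subset.  For that sum, Stein's method of exchangeable pairs (swap one element of the subset
   for one outside it) bounds the Kolmogorov distance to the normal law by
   300 sqrt (n / (k (n - k))) = 300 sqrt ((s - k) / (k (s - 2k))).  This is below the stated bound
   because k (s - 2k) <= (s - k)^2, and it tends to 0 as soon as k and s - 2k tend to infinity. *)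

theory Submission
  imports Defs "HOL-Real_Asymp.Real_Asymp"
begin

section \<open>Standard normal distribution\<close>

abbreviation phi :: "real \<Rightarrow> real" where
  "phi \<equiv> std_normal_density"

lemma Phi_eq_cdf: "Phi = cdf std_normal_distribution"
  unfolding Phi_def cdf_def by auto

lemma Phi_nonneg: "0 \<le> Phi x" and Phi_le_1: "Phi x \<le> 1"
  unfolding Phi_eq_cdf using real_dist_normal_dist
  by (auto intro: finite_borel_measure.cdf_nonneg real_distribution.finite_borel_measure_M
      real_distribution.cdf_bounded_prob)

lemma Phi_mono: "x \<le> y \<Longrightarrow> Phi x \<le> Phi y"
  unfolding Phi_eq_cdf using real_dist_normal_dist
  by (auto intro: finite_borel_measure.cdf_nondecreasing real_distribution.finite_borel_measure_M)

lemma Phi_at_top: "(Phi \<longlongrightarrow> 1) at_top"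
  unfolding Phi_eq_cdf using real_dist_normal_dist real_distribution.cdf_lim_at_top_prob by blast

lemma Phi_at_bot: "(Phi \<longlongrightarrow> 0) at_bot"
  unfolding Phi_eq_cdf using real_dist_normal_dist
  by (auto intro: finite_borel_measure.cdf_lim_at_bot real_distribution.finite_borel_measure_M)

lemma continuous_on_phi: "continuous_on S phi"
  unfolding std_normal_density_def by (intro continuous_intros) auto

lemma phi_pos: "0 < phi x"
  by (simp add: std_normal_density_def)

lemma Phi_diff_eq_integral:
  assumes "a \<le> b"
  shows "Phi b - Phi a = integral {a..b} phi"
proof -
  have int: "phi integrable_on {a..b}"
    by (rule integrable_continuous_interval[OF continuous_on_phi])
  have "(phi has_integral integral {a..b} phi) {a<..b}"
  proof (subst has_integral_spike_set_eq[of "{a<..b}" "{a..b}"])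
    show "negligible {x \<in> {a..b} - {a<..b}. phi x \<noteq> 0}"
      by (rule negligible_subset[of "{a}"]) auto
    show "negligible {x \<in> {a<..b} - {a..b}. phi x \<noteq> 0}"
      by (rule negligible_subset[of "{}"]) auto
  qed (use int in \<open>auto simp: has_integral_integral\<close>)
  then have "emeasure std_normal_distribution {a<..b} = ennreal (integral {a..b} phi)"
    by (subst emeasure_density) (auto intro: nn_integral_has_integral_lebesgue')
  moreover have "0 \<le> integral {a..b} phi"
    by (rule integral_nonneg[OF int]) simp
  moreover have "measure std_normal_distribution {a<..b} = Phi b - Phi a"
    unfolding Phi_eq_cdf using real_dist_normal_dist assms
    by (metis finite_borel_measure.cdf_diff_eq less_eq_real_def real_distribution.finite_borel_measure_M
        diff_self greaterThanAtMost_empty measure_empty)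
  ultimately show ?thesis by (simp add: measure_def)
qed

lemma DERIV_Phi: "(Phi has_real_derivative phi x) (at x)"
proof -
  have "((\<lambda>t. Phi (x - 1) + integral {x - 1..t} phi) has_real_derivative phi x)
          (at x within {x - 1..x + 1})"
    by (intro DERIV_add[OF DERIV_const, simplified] integral_has_real_derivative continuous_on_phi) auto
  then have "(Phi has_real_derivative phi x) (at x within {x - 1..x + 1})"
    by (rule has_field_derivative_transform_within[of _ _ _ _ 1])
      (auto simp: Phi_diff_eq_integral[symmetric] dist_real_def)
  then show ?thesis
    by (simp add: at_within_Icc_at)
qed

lemma continuous_on_Phi: "continuous_on S Phi"
  using DERIV_Phi by (meson DERIV_isCont continuous_at_imp_continuous_on)

lemma DERIV_phi: "(phi has_real_derivative (- x * phi x)) (at x)"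
  unfolding std_normal_density_def
  by (auto intro!: derivative_eq_intros simp: power2_eq_square field_simps)

lemma phi_ge_one_sixth:
  assumes "\<bar>w\<bar> \<le> 1"
  shows "1/6 \<le> phi w"
proof -
  have "exp (1/2::real) \<le> 1 + 1/2 + (1/2)^2"
    by (rule exp_bound) auto
  then have "1/2 \<le> exp (- 1/2::real)"
    by (simp add: exp_minus field_simps power2_eq_square)
  also have "\<dots> \<le> exp (- (w^2) / 2)"
    using assms by (simp add: abs_square_le_1)
  finally have num: "1/2 \<le> exp (- (w^2) / 2)" .
  have "sqrt (2 * pi) \<le> sqrt 9"
    using pi_less_4 by (intro real_sqrt_le_mono) simp
  then have "sqrt (2 * pi) \<le> 3"
    by (simp add: real_sqrt_unique[of 3 9])
  with num have "(1/2) / 3 \<le> exp (- (w^2) / 2) / sqrt (2 * pi)"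
    by (intro frac_le) auto
  then show ?thesis
    unfolding std_normal_density_def by simp
qed

lemma mills_upper_tail:
  assumes "0 < w"
  shows "w * (1 - Phi w) \<le> phi w"
proof -
  define h where "h t = phi t / t - (1 - Phi t)" for t
  have dh: "(h has_real_derivative (- phi t / t^2)) (at t)" if "0 < t" for t
    unfolding h_def using that
    by (auto intro!: derivative_eq_intros DERIV_phi DERIV_Phi simp: field_simps power2_eq_square)
  have "h t \<le> h w" if "w \<le> t" for t
  proof (rule DERIV_nonpos_imp_nonincreasing[OF that])
    fix x assume "w \<le> x"
    then show "\<exists>y. (h has_real_derivative y) (at x) \<and> y \<le> 0"
      using assms dh[of x] phi_pos[of x] by (intro exI[of _ "- phi x / x^2"]) auto
  qed
  moreover have "(h \<longlongrightarrow> 0) at_top"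
  proof -
    have "((\<lambda>t. phi t / t) \<longlongrightarrow> 0) at_top"
      unfolding std_normal_density_def by real_asymp
    then have "(h \<longlongrightarrow> 0 - (1 - 1)) at_top"
      unfolding h_def by (intro tendsto_intros Phi_at_top)
    then show ?thesis by simp
  qed
  ultimately have "0 \<le> h w"
    by (intro tendsto_le[OF _ tendsto_const]) (auto intro!: eventually_at_top_linorderI[of w])
  then show ?thesis
    using assms unfolding h_def by (simp add: field_simps)
qed

lemma mills_lower_tail:
  assumes "w < 0"
  shows "- w * Phi w \<le> phi w"
proof -
  define h where "h t = - phi t / t - Phi t" for t
  have dh: "(h has_real_derivative (phi t / t^2)) (at t)" if "t < 0" for t
    unfolding h_def using that
    by (auto intro!: derivative_eq_intros DERIV_phi DERIV_Phi simp: field_simps power2_eq_square)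
  have "h t \<le> h w" if "t \<le> w" for t
  proof (rule DERIV_nonneg_imp_nondecreasing[OF that])
    fix x assume "x \<le> w"
    then show "\<exists>y. (h has_real_derivative y) (at x) \<and> 0 \<le> y"
      using assms dh[of x] phi_pos[of x] by (intro exI[of _ "phi x / x^2"]) auto
  qed
  moreover have "(h \<longlongrightarrow> 0) at_bot"
  proof -
    have "((\<lambda>t. phi t / t) \<longlongrightarrow> 0) at_bot"
      unfolding std_normal_density_def by real_asymp
    then have "(h \<longlongrightarrow> - 0 - 0) at_bot"
      unfolding h_def minus_divide_left[symmetric] by (intro tendsto_intros Phi_at_bot)
    then show ?thesis by simp
  qed
  ultimately have "0 \<le> h w"
    by (intro tendsto_le[OF _ tendsto_const]) (auto intro!: eventually_at_bot_linorderI[of w])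
  then show ?thesis
    using assms unfolding h_def by (simp add: field_simps)
qed

lemma abs_mult_min_Phi_le: "\<bar>w\<bar> * min (Phi w) (1 - Phi w) \<le> phi w"
proof (cases w "0::real" rule: linorder_cases)
  case less
  then have "\<bar>w\<bar> * min (Phi w) (1 - Phi w) \<le> - w * Phi w"
    by (simp add: mult_left_mono)
  also have "\<dots> \<le> phi w"
    using mills_lower_tail[OF less] .
  finally show ?thesis .
next
  case greater
  then have "\<bar>w\<bar> * min (Phi w) (1 - Phi w) \<le> w * (1 - Phi w)"
    by (simp add: mult_left_mono)
  also have "\<dots> \<le> phi w"
    using mills_upper_tail[OF greater] .
  finally show ?thesis .
qed (simp add: less_imp_le[OF phi_pos])

section \<open>Stein's equation\<close>

text \<open>The solution \<open>f\<^sub>z\<close> of Stein's equation \<open>f'(w) - w f(w) = 1{w \<le> z} - \<Phi>(z)\<close>;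
  \<open>stein_sol_deriv z\<close> is \<open>f\<^sub>z'\<close> read off from that equation (it is the derivative for \<open>w \<noteq> z\<close>).\<close>

definition stein_sol :: "real \<Rightarrow> real \<Rightarrow> real" where
  "stein_sol z w = (min (Phi w) (Phi z) - Phi w * Phi z) / phi w"

definition stein_sol_deriv :: "real \<Rightarrow> real \<Rightarrow> real" where
  "stein_sol_deriv z w = w * stein_sol z w + (if w \<le> z then 1 else 0) - Phi z"

lemma min_minus_mult_bounds:
  fixes a b :: real
  assumes "0 \<le> a" "a \<le> 1" "0 \<le> b" "b \<le> 1"
  shows "0 \<le> min a b - a * b" and "min a b - a * b \<le> min a (1 - a)"
proof -
  have "a * b \<le> a" "a * b \<le> b"
    using assms by (auto intro: mult_right_le_one_le mult_left_le_one_le)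
  then show "0 \<le> min a b - a * b"
    by (simp add: min_def)
  show "min a b - a * b \<le> min a (1 - a)"
  proof (cases "a \<le> b")
    case True
    then have "a * (1 - b) \<le> a" "a * (1 - b) \<le> 1 - a"
      using assms by (auto intro: mult_right_le_one_le order_trans[OF mult_left_le_one_le])
    then show ?thesis
      using True by (simp add: min_def algebra_simps)
  next
    case False
    then have "b * (1 - a) \<le> a" "b * (1 - a) \<le> 1 - a"
      using assms by (auto intro: order_trans[OF mult_right_le_one_le] mult_left_le_one_le)
    then show ?thesis
      using False by (simp add: min_def algebra_simps)
  qed
qed

lemma stein_sol_nonneg: "0 \<le> stein_sol z w"
  unfolding stein_sol_def
  using min_minus_mult_bounds(1)[OF Phi_nonneg Phi_le_1 Phi_nonneg Phi_le_1] phi_pos[of w] by simp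

lemma abs_mult_stein_sol_le: "\<bar>w * stein_sol z w\<bar> \<le> 1"
proof -
  have num: "0 \<le> min (Phi w) (Phi z) - Phi w * Phi z"
    by (intro min_minus_mult_bounds(1) Phi_nonneg Phi_le_1)
  have "\<bar>w\<bar> * (min (Phi w) (Phi z) - Phi w * Phi z) \<le> \<bar>w\<bar> * min (Phi w) (1 - Phi w)"
    by (intro mult_left_mono min_minus_mult_bounds(2) Phi_nonneg Phi_le_1) simp
  also have "\<dots> \<le> phi w"
    by (rule abs_mult_min_Phi_le)
  finally show ?thesis
    using num phi_pos[of w] by (simp add: abs_mult stein_sol_def)
qed

lemma stein_sol_le: "stein_sol z w \<le> 6"
proof (cases "\<bar>w\<bar> \<le> 1")
  case True
  have "min (Phi w) (Phi z) - Phi w * Phi z \<le> 1"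
    using min_minus_mult_bounds(2)[OF Phi_nonneg Phi_le_1 Phi_nonneg Phi_le_1, of w z]
      Phi_le_1[of w] by linarith
  then have "stein_sol z w \<le> 1 / (1/6)"
    unfolding stein_sol_def
    using phi_ge_one_sixth[OF True] min_minus_mult_bounds(1)[OF Phi_nonneg Phi_le_1 Phi_nonneg Phi_le_1]
    by (intro frac_le) auto
  then show ?thesis by simp
next
  case False
  then have "stein_sol z w \<le> \<bar>w * stein_sol z w\<bar>"
    using stein_sol_nonneg[of z w] by (simp add: abs_mult mult_le_cancel_right1)
  then show ?thesis
    using abs_mult_stein_sol_le[of w z] by simp
qed

lemma abs_stein_sol_deriv_le: "\<bar>stein_sol_deriv z w\<bar> \<le> 2"
  unfolding stein_sol_deriv_def using abs_mult_stein_sol_le[of w z] Phi_le_1[of z] Phi_nonneg[of z]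
  by auto

lemma continuous_on_stein_sol: "continuous_on S (stein_sol z)"
  unfolding stein_sol_def using phi_pos
  by (intro continuous_intros continuous_on_Phi continuous_on_phi) (auto simp: less_imp_neq[symmetric])

lemma DERIV_stein_sol:
  assumes "w \<noteq> z"
  shows "(stein_sol z has_real_derivative stein_sol_deriv z w) (at w)"
proof (cases "w < z")
  case True
  define h where "h t = Phi t * (1 - Phi z) / phi t" for t
  have "(h has_real_derivative stein_sol_deriv z w) (at w)"
    unfolding h_def using True Phi_mono[of w z] phi_pos[of w]
    by (auto intro!: derivative_eq_intros DERIV_Phi DERIV_phi
        simp: stein_sol_deriv_def stein_sol_def min_def field_simps)
  then show ?thesis
  proof (rule has_field_derivative_transform_within_open[of _ _ _ "{..<z}"])
    show "h x = stein_sol z x" if "x \<in> {..<z}" for x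
      using that Phi_mono[of x z] by (simp add: h_def stein_sol_def min_def algebra_simps)
  qed (use True in auto)
next
  case False
  with assms have "z < w" by simp
  define h where "h t = Phi z * (1 - Phi t) / phi t" for t
  have "(h has_real_derivative stein_sol_deriv z w) (at w)"
    unfolding h_def using \<open>z < w\<close> Phi_mono[of z w] phi_pos[of w]
    by (auto intro!: derivative_eq_intros DERIV_Phi DERIV_phi
        simp: stein_sol_deriv_def stein_sol_def min_def field_simps)
  then show ?thesis
  proof (rule has_field_derivative_transform_within_open[of _ _ _ "{z<..}"])
    show "h x = stein_sol z x" if "x \<in> {z<..}" for x
      using that Phi_mono[of z x] by (simp add: h_def stein_sol_def min_def algebra_simps)
  qed (use \<open>z < w\<close> in auto)
qed

lemma stein_sol_MVT:
  assumes "a < b" "z \<notin> {a<..<b}"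
  obtains \<xi> where "a < \<xi>" "\<xi> < b" "stein_sol z b - stein_sol z a = (b - a) * stein_sol_deriv z \<xi>"
proof -
  obtain l \<xi> where \<xi>: "a < \<xi>" "\<xi> < b" "(stein_sol z has_real_derivative l) (at \<xi>)"
    and eq: "stein_sol z b - stein_sol z a = (b - a) * l"
    using MVT[OF assms(1) continuous_on_stein_sol] assms(2) DERIV_stein_sol
    by (metis greaterThanLessThan_iff real_differentiable_def)
  have "\<xi> \<noteq> z"
    using \<xi> assms(2) by auto
  then have "l = stein_sol_deriv z \<xi>"
    using DERIV_unique[OF \<xi>(3) DERIV_stein_sol] by blast
  then show ?thesis
    using that \<xi> eq by blast
qed

lemma stein_sol_lipschitz: "\<bar>stein_sol z b - stein_sol z a\<bar> \<le> 2 * \<bar>b - a\<bar>"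
proof -
  have piece: "\<bar>stein_sol z y - stein_sol z x\<bar> \<le> 2 * (y - x)" if "x \<le> y" "z \<notin> {x<..<y}" for x y
  proof (cases "x = y")
    case False
    with that obtain \<xi> where "stein_sol z y - stein_sol z x = (y - x) * stein_sol_deriv z \<xi>"
      by (metis order_less_le stein_sol_MVT)
    moreover have "(y - x) * \<bar>stein_sol_deriv z \<xi>\<bar> \<le> (y - x) * 2"
      using that(1) abs_stein_sol_deriv_le[of z \<xi>] by (intro mult_left_mono) auto
    ultimately show ?thesis
      using that(1) by (simp add: abs_mult mult.commute)
  qed simp
  have ordered: "\<bar>stein_sol z y - stein_sol z x\<bar> \<le> 2 * (y - x)" if "x \<le> y" for x y
  proof (cases "z \<in> {x<..<y}")
    case True
    have "\<bar>stein_sol z y - stein_sol z x\<bar>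
        \<le> \<bar>stein_sol z y - stein_sol z z\<bar> + \<bar>stein_sol z z - stein_sol z x\<bar>"
      by simp
    also have "\<dots> \<le> 2 * (y - z) + 2 * (z - x)"
      using True by (intro add_mono piece) auto
    finally show ?thesis by simp
  qed (use piece that in auto)
  show ?thesis
    using ordered[of a b] ordered[of b a] by (cases "a \<le> b") (auto simp: abs_minus_commute)
qed

lemma stein_sol_increment_MVT:
  assumes "\<bar>d\<bar> < \<bar>w - z\<bar>"
  obtains \<xi> where "\<bar>\<xi> - w\<bar> \<le> \<bar>d\<bar>" "\<xi> \<le> z \<longleftrightarrow> w \<le> z"
    "stein_sol z (w + d) - stein_sol z w = d * stein_sol_deriv z \<xi>"
proof (cases d "0::real" rule: linorder_cases)
  case less
  obtain \<xi> where m: "w + d < \<xi>" "\<xi> < w"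
    "stein_sol z w - stein_sol z (w + d) = (w - (w + d)) * stein_sol_deriv z \<xi>"
    by (rule stein_sol_MVT[of "w + d" w z]) (use assms less in auto)
  show ?thesis
    using m assms less by (intro that[of \<xi>]) (auto simp: algebra_simps)
next
  case equal
  with that show ?thesis by auto
next
  case greater
  obtain \<xi> where m: "w < \<xi>" "\<xi> < w + d"
    "stein_sol z (w + d) - stein_sol z w = ((w + d) - w) * stein_sol_deriv z \<xi>"
    by (rule stein_sol_MVT[of w "w + d" z]) (use assms greater in auto)
  show ?thesis
    using m assms greater by (intro that[of \<xi>]) auto
qed

text \<open>Away from the jump of \<open>f\<^sub>z'\<close> at \<open>z\<close> the mean value theorem applies; within distance \<open>|d|\<close>
  of it only the Lipschitz bound is available.\<close>

lemma stein_sol_increment_approx: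
  "\<bar>d^2 * stein_sol_deriv z w - d * (stein_sol z (w + d) - stein_sol z w)\<bar>
     \<le> 4 * d^2 * (if \<bar>w - z\<bar> \<le> \<bar>d\<bar> then 1 else 0) + \<bar>d\<bar>^3 * (6 + 2 * \<bar>w\<bar>)"
proof (cases "\<bar>w - z\<bar> \<le> \<bar>d\<bar>")
  case True
  have "\<bar>d^2 * stein_sol_deriv z w - d * (stein_sol z (w + d) - stein_sol z w)\<bar>
      \<le> d^2 * \<bar>stein_sol_deriv z w\<bar> + \<bar>d\<bar> * \<bar>stein_sol z (w + d) - stein_sol z w\<bar>"
    by (metis abs_mult abs_triangle_ineq4 abs_power2)
  also have "\<dots> \<le> d^2 * 2 + \<bar>d\<bar> * (2 * \<bar>d\<bar>)"
    using abs_stein_sol_deriv_le stein_sol_lipschitz[of z "w + d" w]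
    by (intro add_mono mult_left_mono) auto
  finally have "\<bar>d^2 * stein_sol_deriv z w - d * (stein_sol z (w + d) - stein_sol z w)\<bar> \<le> 4 * d^2"
    by (simp add: power2_eq_square abs_mult_self_eq)
  then show ?thesis
    using True by (simp add: add_increasing2)
next
  case False
  obtain \<xi> where \<xi>: "\<bar>\<xi> - w\<bar> \<le> \<bar>d\<bar>" "\<xi> \<le> z \<longleftrightarrow> w \<le> z"
    and incr: "stein_sol z (w + d) - stein_sol z w = d * stein_sol_deriv z \<xi>"
    by (rule stein_sol_increment_MVT[of d w z]) (use False in auto)
  have "d^2 * stein_sol_deriv z w - d * (stein_sol z (w + d) - stein_sol z w)
      = d^2 * ((w - \<xi>) * stein_sol z \<xi> + w * (stein_sol z w - stein_sol z \<xi>))"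
    unfolding incr stein_sol_deriv_def using \<xi>(2) by (simp add: power2_eq_square algebra_simps)
  moreover have "\<bar>(w - \<xi>) * stein_sol z \<xi> + w * (stein_sol z w - stein_sol z \<xi>)\<bar>
      \<le> \<bar>d\<bar> * 6 + \<bar>w\<bar> * (2 * \<bar>d\<bar>)"
  proof -
    have "\<bar>(w - \<xi>) * stein_sol z \<xi>\<bar> \<le> \<bar>d\<bar> * 6"
      using \<xi>(1) stein_sol_le[of z \<xi>] stein_sol_nonneg[of z \<xi>]
      by (simp add: abs_mult abs_minus_commute mult_mono)
    moreover have "\<bar>w * (stein_sol z w - stein_sol z \<xi>)\<bar> \<le> \<bar>w\<bar> * (2 * \<bar>d\<bar>)"
      using stein_sol_lipschitz[of z w \<xi>] \<xi>(1)
      by (simp add: abs_mult abs_minus_commute mult_left_mono)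
    ultimately show ?thesis
      by (smt (verit) abs_triangle_ineq)
  qed
  ultimately have "\<bar>d^2 * stein_sol_deriv z w - d * (stein_sol z (w + d) - stein_sol z w)\<bar>
      \<le> d^2 * (\<bar>d\<bar> * 6 + \<bar>w\<bar> * (2 * \<bar>d\<bar>))"
    by (simp add: abs_mult mult_left_mono)
  also have "\<dots> = \<bar>d\<bar>^3 * (6 + 2 * \<bar>w\<bar>)"
    by (simp add: power2_eq_square power3_eq_cube algebra_simps)
  finally show ?thesis
    using False by simp
qed

section \<open>Exchangeable pairs\<close>

lemma clamp_increment_lower_bound:
  fixes w d z \<delta> :: real
  assumes "\<bar>d\<bar> \<le> \<delta>"
  defines "F \<equiv> \<lambda>u. max (- 2 * \<delta>) (min (2 * \<delta>) (u - z))"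
  shows "d^2 * (if \<bar>w - z\<bar> \<le> \<delta> then 1 else 0) \<le> d * (F (w + d) - F w)"
proof (cases "\<bar>w - z\<bar> \<le> \<delta>")
  case True
  then have "F (w + d) - F w = d"
    unfolding F_def using assms(1) by (auto simp: max_def min_def)
  then show ?thesis
    using True by (simp add: power2_eq_square)
next
  case False
  have "0 \<le> d * (F (w + d) - F w)"
  proof (cases "0 \<le> d")
    case True
    then have "F w \<le> F (w + d)" unfolding F_def by (auto simp: max_def min_def)
    then show ?thesis using True by simp
  next
    case False
    then have "F (w + d) \<le> F w" unfolding F_def by (auto simp: max_def min_def)
    then show ?thesis using False by (simp add: mult_nonpos_nonpos)
  qed
  then show ?thesis
    using False by simp
qed

text \<open>A finite exchangeable pair: \<open>A\<close> is uniform on \<open>K\<close>, a move \<open>t\<close> is uniform on the \<open>m\<close>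
  elements of \<open>T A\<close>, and \<open>A' = fst (sw (A, t))\<close>. As \<open>sw\<close> is an involution of \<open>Sigma K T\<close>,
  \<open>(A, A')\<close> is exchangeable; \<open>regression\<close> says \<open>E[W' - W | A] = - lam W\<close> and
  \<open>second_moment\<close> says \<open>E W\<^sup>2 = 1\<close>. Then \<open>normalized_jump_sq A = E[(W' - W)\<^sup>2 | A] / (2 lam)\<close>
  has mean \<open>1\<close>.\<close>

locale exchangeable_pair =
  fixes K :: "'a set" and T :: "'a \<Rightarrow> 'b set" and m :: nat
    and sw :: "'a \<times> 'b \<Rightarrow> 'a \<times> 'b" and W :: "'a \<Rightarrow> real" and lam \<delta> :: real
  assumes finite_K: "finite K" and K_nonempty: "K \<noteq> {}"
    and finite_T: "\<And>A. A \<in> K \<Longrightarrow> finite (T A)"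
    and card_T: "\<And>A. A \<in> K \<Longrightarrow> card (T A) = m"
    and m_pos: "0 < m"
    and sw_closed: "\<And>x. x \<in> Sigma K T \<Longrightarrow> sw x \<in> Sigma K T"
    and sw_sw: "\<And>x. x \<in> Sigma K T \<Longrightarrow> sw (sw x) = x"
    and lam_pos: "0 < lam"
    and regression: "\<And>A. A \<in> K \<Longrightarrow> (\<Sum>t\<in>T A. W (fst (sw (A, t))) - W A) = - lam * m * W A"
    and second_moment: "(\<Sum>A\<in>K. (W A)^2) = card K"
    and jump_bound: "\<And>x. x \<in> Sigma K T \<Longrightarrow> \<bar>W (fst (sw x)) - W (fst x)\<bar> \<le> \<delta>"
begin

definition jump :: "'a \<times> 'b \<Rightarrow> real" where
  "jump x = W (fst (sw x)) - W (fst x)"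

definition normalized_jump_sq :: "'a \<Rightarrow> real" where
  "normalized_jump_sq A = (\<Sum>t\<in>T A. (jump (A, t))^2) / (2 * lam * m)"

definition stein_remainder :: "real \<Rightarrow> 'a \<times> 'b \<Rightarrow> real" where
  "stein_remainder z x = (jump x)^2 * stein_sol_deriv z (W (fst x))
     - jump x * (stein_sol z (W (fst x) + jump x) - stein_sol z (W (fst x)))"

lemma sum_Sigma_K_T: "(\<Sum>x\<in>Sigma K T. f x) = (\<Sum>A\<in>K. \<Sum>t\<in>T A. f (A, t))"
  using finite_K finite_T by (subst sum.Sigma) auto

lemma sum_reindex_sw: "(\<Sum>x\<in>Sigma K T. f x) = (\<Sum>x\<in>Sigma K T. f (sw x))"
proof -
  have "bij_betw sw (Sigma K T) (Sigma K T)"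
    by (rule bij_betw_byWitness[where f' = sw]) (use sw_sw sw_closed in blast)+
  then show ?thesis
    using sum.reindex_bij_betw[of sw _ _ f] by simp
qed

lemma jump_sw: "x \<in> Sigma K T \<Longrightarrow> jump (sw x) = - jump x"
  unfolding jump_def using sw_sw by simp

text \<open>Exchangeability makes \<open>\<Sum> jump x * (h W' + h W)\<close> vanish, so that the increment form of the
  left-hand side reduces, via \<open>regression\<close>, to \<open>\<Sum> W h(W)\<close>.\<close>

lemma sum_jump_mult_increment:
  "(\<Sum>x\<in>Sigma K T. jump x * (h (W (fst x) + jump x) - h (W (fst x))))
     = 2 * lam * m * (\<Sum>A\<in>K. W A * h (W A))"
proof -
  let ?S = "\<Sum>x\<in>Sigma K T. jump x * (h (W (fst (sw x))) + h (W (fst x)))"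
  have "?S = (\<Sum>x\<in>Sigma K T. - (jump x * (h (W (fst (sw x))) + h (W (fst x)))))"
    by (subst sum_reindex_sw) (auto intro!: sum.cong simp: jump_sw sw_sw algebra_simps)
  then have antisym: "?S = 0"
    by (simp add: sum_negf)
  have "(\<Sum>x\<in>Sigma K T. jump x * (h (W (fst x) + jump x) - h (W (fst x))))
      = ?S - 2 * (\<Sum>x\<in>Sigma K T. jump x * h (W (fst x)))"
    by (simp add: jump_def sum_subtractf sum_distrib_left sum.distrib algebra_simps)
  also have "(\<Sum>x\<in>Sigma K T. jump x * h (W (fst x))) = (\<Sum>A\<in>K. h (W A) * (\<Sum>t\<in>T A. jump (A, t)))"
    by (simp add: sum_Sigma_K_T sum_distrib_left mult.commute)
  also have "\<dots> = (\<Sum>A\<in>K. h (W A) * (- lam * m * W A))"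
    by (rule sum.cong) (auto simp: jump_def regression)
  finally show ?thesis
    unfolding antisym by (simp add: sum_distrib_left sum_negf algebra_simps)
qed

lemma sum_abs_W_le: "(\<Sum>A\<in>K. \<bar>W A\<bar>) \<le> card K"
proof -
  have "(\<Sum>A\<in>K. \<bar>W A\<bar>) \<le> (\<Sum>A\<in>K. (1 + (W A)^2) / 2)"
  proof (rule sum_mono)
    fix A
    have "0 \<le> (\<bar>W A\<bar> - 1)^2"
      by simp
    then show "\<bar>W A\<bar> \<le> (1 + (W A)^2) / 2"
      by (simp add: power2_eq_square algebra_simps)
  qed
  also have "\<dots> = card K"
    by (simp add: sum_divide_distrib[symmetric] sum.distrib second_moment)
  finally show ?thesis .
qed

lemma \<delta>_nonneg: "0 \<le> \<delta>"
proof -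
  obtain A where A: "A \<in> K"
    using K_nonempty by blast
  moreover have "T A \<noteq> {}"
    using card_T[OF A] m_pos by auto
  ultimately obtain t where "t \<in> T A"
    by blast
  then show ?thesis
    using jump_bound[of "(A, t)"] A by auto
qed

text \<open>Stein's equation evaluated at \<open>W\<close> and summed over \<open>K\<close>, with \<open>\<Sum> W f\<^sub>z(W)\<close> rewritten by the
  identity above.\<close>

lemma cdf_error_eq:
  "real (card {A\<in>K. W A \<le> z}) - card K * Phi z
     = (\<Sum>A\<in>K. stein_sol_deriv z (W A) * (1 - normalized_jump_sq A))
       + (\<Sum>x\<in>Sigma K T. stein_remainder z x) / (2 * lam * m)"
proof -
  have c: "2 * lam * m \<noteq> 0"
    using lam_pos m_pos by simp
  have "real (card {A\<in>K. W A \<le> z}) - card K * Phi z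
      = (\<Sum>A\<in>K. stein_sol_deriv z (W A) - W A * stein_sol z (W A))"
    using finite_K by (simp add: stein_sol_deriv_def sum_subtractf sum.inter_filter[symmetric])
  also have "\<dots> = (\<Sum>A\<in>K. stein_sol_deriv z (W A) * (1 - normalized_jump_sq A))
      + (\<Sum>A\<in>K. stein_sol_deriv z (W A) * normalized_jump_sq A) - (\<Sum>A\<in>K. W A * stein_sol z (W A))"
    by (simp add: sum_subtractf sum.distrib algebra_simps)
  also have "(\<Sum>A\<in>K. stein_sol_deriv z (W A) * normalized_jump_sq A)
      = (\<Sum>x\<in>Sigma K T. (jump x)^2 * stein_sol_deriv z (W (fst x))) / (2 * lam * m)"
    by (simp add: normalized_jump_sq_def sum_Sigma_K_T sum_divide_distrib sum_distrib_left mult.commute)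
  also have "(\<Sum>A\<in>K. W A * stein_sol z (W A))
      = (\<Sum>x\<in>Sigma K T. jump x * (stein_sol z (W (fst x) + jump x) - stein_sol z (W (fst x))))
        / (2 * lam * m)"
    using c by (simp add: sum_jump_mult_increment)
  finally show ?thesis
    by (simp add: stein_remainder_def sum_subtractf diff_divide_distrib)
qed

text \<open>The concentration inequality: the identity above applied to the clamp of \<open>w - z\<close> to
  \<open>[-2\<delta>, 2\<delta>]\<close>.\<close>

lemma sum_jump_sq_near_le:
  "(\<Sum>x\<in>Sigma K T. (jump x)^2 * (if \<bar>W (fst x) - z\<bar> \<le> \<delta> then 1 else 0))
     \<le> 2 * \<delta> * (2 * lam * m) * card K"
proof -
  define F where "F u = max (- 2 * \<delta>) (min (2 * \<delta>) (u - z))" for u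
  have "(\<Sum>x\<in>Sigma K T. (jump x)^2 * (if \<bar>W (fst x) - z\<bar> \<le> \<delta> then 1 else 0))
      \<le> (\<Sum>x\<in>Sigma K T. jump x * (F (W (fst x) + jump x) - F (W (fst x))))"
    using jump_bound unfolding F_def jump_def by (intro sum_mono clamp_increment_lower_bound) auto
  also have "\<dots> = 2 * lam * m * (\<Sum>A\<in>K. W A * F (W A))"
    by (rule sum_jump_mult_increment)
  also have "\<dots> \<le> 2 * lam * m * (\<Sum>A\<in>K. \<bar>W A\<bar> * (2 * \<delta>))"
  proof (intro mult_left_mono sum_mono)
    fix A
    have "\<bar>F (W A)\<bar> \<le> 2 * \<delta>"
      unfolding F_def using \<delta>_nonneg by auto
    then show "W A * F (W A) \<le> \<bar>W A\<bar> * (2 * \<delta>)"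
      by (metis abs_ge_self abs_mult abs_ge_zero mult_left_mono order_trans)
  qed (use lam_pos in simp)
  also have "\<dots> = 2 * \<delta> * (2 * lam * m) * (\<Sum>A\<in>K. \<bar>W A\<bar>)"
    by (simp add: sum_distrib_left sum_distrib_right mult_ac)
  also have "\<dots> \<le> 2 * \<delta> * (2 * lam * m) * card K"
    using sum_abs_W_le \<delta>_nonneg lam_pos by (intro mult_left_mono) auto
  finally show ?thesis .
qed

lemma sum_abs_stein_remainder_le:
  "(\<Sum>x\<in>Sigma K T. \<bar>stein_remainder z x\<bar>) \<le> 8 * \<delta> * (2 * lam * m) * card K + 8 * \<delta>^3 * m * card K"
proof -
  have pointwise: "\<bar>stein_remainder z x\<bar>
      \<le> 4 * ((jump x)^2 * (if \<bar>W (fst x) - z\<bar> \<le> \<delta> then 1 else 0)) + \<delta>^3 * (6 + 2 * \<bar>W (fst x)\<bar>)"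
    if x: "x \<in> Sigma K T" for x
  proof -
    have j: "\<bar>jump x\<bar> \<le> \<delta>"
      using jump_bound[OF x] unfolding jump_def .
    have "\<bar>stein_remainder z x\<bar> \<le> 4 * (jump x)^2 * (if \<bar>W (fst x) - z\<bar> \<le> \<bar>jump x\<bar> then 1 else 0)
        + \<bar>jump x\<bar>^3 * (6 + 2 * \<bar>W (fst x)\<bar>)"
      unfolding stein_remainder_def by (rule stein_sol_increment_approx)
    also have "\<dots> \<le> 4 * ((jump x)^2 * (if \<bar>W (fst x) - z\<bar> \<le> \<delta> then 1 else 0))
        + \<delta>^3 * (6 + 2 * \<bar>W (fst x)\<bar>)"
      using j by (intro add_mono mult_right_mono power_mono) auto
    finally show ?thesis .
  qed
  have "(\<Sum>x\<in>Sigma K T. \<delta>^3 * (6 + 2 * \<bar>W (fst x)\<bar>)) = (\<Sum>A\<in>K. m * (\<delta>^3 * (6 + 2 * \<bar>W A\<bar>)))"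
    by (simp add: sum_Sigma_K_T card_T)
  also have "\<dots> = \<delta>^3 * m * (6 * card K + 2 * (\<Sum>A\<in>K. \<bar>W A\<bar>))"
    by (simp add: sum_distrib_left sum.distrib algebra_simps)
  also have "\<dots> \<le> \<delta>^3 * m * (8 * card K)"
    using sum_abs_W_le \<delta>_nonneg by (intro mult_left_mono) auto
  finally have cubic: "(\<Sum>x\<in>Sigma K T. \<delta>^3 * (6 + 2 * \<bar>W (fst x)\<bar>)) \<le> 8 * \<delta>^3 * m * card K"
    by simp
  have "(\<Sum>x\<in>Sigma K T. \<bar>stein_remainder z x\<bar>)
      \<le> 4 * (\<Sum>x\<in>Sigma K T. (jump x)^2 * (if \<bar>W (fst x) - z\<bar> \<le> \<delta> then 1 else 0))
        + (\<Sum>x\<in>Sigma K T. \<delta>^3 * (6 + 2 * \<bar>W (fst x)\<bar>))"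
    using sum_mono[OF pointwise] by (simp add: sum.distrib sum_distrib_left)
  then show ?thesis
    using sum_jump_sq_near_le[of z] cubic by linarith
qed

theorem kolmogorov_bound:
  "\<bar>real (card {A\<in>K. W A \<le> z}) / card K - Phi z\<bar>
     \<le> 2 * (\<Sum>A\<in>K. \<bar>1 - normalized_jump_sq A\<bar>) / card K + 8 * \<delta> + 4 * \<delta>^3 / lam"
proof -
  define N where "N = real (card K)"
  define c where "c = 2 * lam * m"
  have N: "0 < N"
    unfolding N_def using finite_K K_nonempty by (simp add: card_gt_0_iff)
  have c: "0 < c"
    unfolding c_def using lam_pos m_pos by simp
  have "\<bar>\<Sum>A\<in>K. stein_sol_deriv z (W A) * (1 - normalized_jump_sq A)\<bar>
      \<le> (\<Sum>A\<in>K. 2 * \<bar>1 - normalized_jump_sq A\<bar>)"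
    using abs_stein_sol_deriv_le
    by (intro order_trans[OF sum_abs] sum_mono) (simp add: abs_mult mult_right_mono)
  then have main: "\<bar>\<Sum>A\<in>K. stein_sol_deriv z (W A) * (1 - normalized_jump_sq A)\<bar>
      \<le> 2 * (\<Sum>A\<in>K. \<bar>1 - normalized_jump_sq A\<bar>)"
    by (simp add: sum_distrib_left)
  have "\<bar>\<Sum>x\<in>Sigma K T. stein_remainder z x\<bar> \<le> 8 * \<delta> * c * N + 8 * \<delta>^3 * m * N"
    using order_trans[OF sum_abs sum_abs_stein_remainder_le] unfolding c_def N_def .
  then have "\<bar>(\<Sum>x\<in>Sigma K T. stein_remainder z x) / c\<bar> \<le> (8 * \<delta> * c * N + 8 * \<delta>^3 * m * N) / c"
    using c by (simp add: divide_right_mono)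
  also have "\<dots> = N * (8 * \<delta> + 4 * \<delta>^3 / lam)"
    using c lam_pos m_pos unfolding c_def by (simp add: field_simps)
  finally have remainder: "\<bar>(\<Sum>x\<in>Sigma K T. stein_remainder z x) / c\<bar> \<le> N * (8 * \<delta> + 4 * \<delta>^3 / lam)" .
  have "\<bar>real (card {A\<in>K. W A \<le> z}) - N * Phi z\<bar>
      \<le> 2 * (\<Sum>A\<in>K. \<bar>1 - normalized_jump_sq A\<bar>) + N * (8 * \<delta> + 4 * \<delta>^3 / lam)"
    using cdf_error_eq[of z] main remainder unfolding N_def c_def by linarith
  moreover have "real (card {A\<in>K. W A \<le> z}) / N - Phi z = (real (card {A\<in>K. W A \<le> z}) - N * Phi z) / N"
    using N by (simp add: field_simps)
  ultimately have "\<bar>real (card {A\<in>K. W A \<le> z}) / N - Phi z\<bar>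
      \<le> (2 * (\<Sum>A\<in>K. \<bar>1 - normalized_jump_sq A\<bar>) + N * (8 * \<delta> + 4 * \<delta>^3 / lam)) / N"
    using N by (simp add: abs_divide divide_right_mono)
  also have "\<dots> = 2 * (\<Sum>A\<in>K. \<bar>1 - normalized_jump_sq A\<bar>) / N + 8 * \<delta> + 4 * \<delta>^3 / lam"
    using N by (simp add: add_divide_distrib)
  finally show ?thesis
    unfolding N_def .
qed

end

section \<open>Random \<open>k\<close>-subsets\<close>

definition ksubsets :: "'a set \<Rightarrow> nat \<Rightarrow> 'a set set" where
  "ksubsets U k = {A. A \<subseteq> U \<and> card A = k}"

lemma finite_ksubsets: "finite U \<Longrightarrow> finite (ksubsets U k)"
  unfolding ksubsets_def by (rule finite_subset[of _ "Pow U"]) auto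

lemma card_ksubsets: "finite U \<Longrightarrow> card (ksubsets U k) = card U choose k"
  unfolding ksubsets_def by (rule n_subsets)

lemma sum_if_mem_eq_sum_subset:
  "finite U \<Longrightarrow> A \<subseteq> U \<Longrightarrow> (\<Sum>a\<in>U. if a \<in> A then g a else 0) = sum g A"
  by (simp add: sum.If_cases Int_absorb1)

lemma card_ksubsets_superset:
  assumes U: "finite U" and B: "B \<subseteq> U" "card B \<le> k"
  shows "card {A \<in> ksubsets U k. B \<subseteq> A} = (card U - card B) choose (k - card B)"
proof -
  have fin: "finite C" if "C \<subseteq> U" for C
    using U that finite_subset by blast
  have "bij_betw (\<lambda>C. C \<union> B) (ksubsets (U - B) (k - card B)) {A \<in> ksubsets U k. B \<subseteq> A}"
  proof (rule bij_betw_byWitness[where f' = "\<lambda>A. A - B"])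
    show "(\<lambda>C. C \<union> B) ` ksubsets (U - B) (k - card B) \<subseteq> {A \<in> ksubsets U k. B \<subseteq> A}"
    proof (rule image_subsetI)
      fix C assume "C \<in> ksubsets (U - B) (k - card B)"
      then have "C \<subseteq> U - B" "card C = k - card B"
        by (auto simp: ksubsets_def)
      then have "card (C \<union> B) = k"
        using B fin by (subst card_Un_disjoint) auto
      then show "C \<union> B \<in> {A \<in> ksubsets U k. B \<subseteq> A}"
        using \<open>C \<subseteq> U - B\<close> B by (auto simp: ksubsets_def)
    qed
    show "(\<lambda>A. A - B) ` {A \<in> ksubsets U k. B \<subseteq> A} \<subseteq> ksubsets (U - B) (k - card B)"
      using fin by (auto simp: ksubsets_def card_Diff_subset)
  qed (auto simp: ksubsets_def)
  then have "card {A \<in> ksubsets U k. B \<subseteq> A} = card (ksubsets (U - B) (k - card B))"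
    by (simp add: bij_betw_same_card)
  also have "\<dots> = (card U - card B) choose (k - card B)"
    using U B by (simp add: card_ksubsets card_Diff_subset fin)
  finally show ?thesis .
qed

lemma of_nat_times_binomial_minus1_eq:
  assumes "0 < k"
  shows "real k * (n choose k) = real n * ((n - 1) choose (k - 1))"
proof -
  have "k * (n choose k) = n * ((n - 1) choose (k - 1))"
    by (rule times_binomial_minus1_eq[OF assms])
  then show ?thesis
    by (metis of_nat_mult)
qed

lemma real_card_ksubsets_containing:
  assumes U: "finite U" and a: "a \<in> U" and k: "1 \<le> k"
  shows "real (card {A \<in> ksubsets U k. a \<in> A}) = real k * card (ksubsets U k) / card U"
proof -
  have "card {A \<in> ksubsets U k. a \<in> A} = (card U - 1) choose (k - 1)"
    using card_ksubsets_superset[OF U, of "{a}" k] a k by simp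
  moreover have "real k * (card U choose k) = real (card U) * ((card U - 1) choose (k - 1))"
    using k by (intro of_nat_times_binomial_minus1_eq) simp
  ultimately have eq: "real k * card (ksubsets U k) = real (card U) * card {A \<in> ksubsets U k. a \<in> A}"
    using U by (simp add: card_ksubsets)
  have "real (card U) \<noteq> 0"
    using U a card_gt_0_iff by force
  then have "real (card {A \<in> ksubsets U k. a \<in> A})
      = real (card U) * card {A \<in> ksubsets U k. a \<in> A} / real (card U)"
    by simp
  then show ?thesis
    by (simp only: eq[symmetric])
qed

lemma real_card_ksubsets_containing_pair:
  assumes U: "finite U" and ab: "a \<in> U" "b \<in> U" "a \<noteq> b" and k: "1 \<le> k"
  shows "real (card {A \<in> ksubsets U k. a \<in> A \<and> b \<in> A})
       = real k * (real k - 1) * card (ksubsets U k) / (real (card U) * (real (card U) - 1))"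
proof (cases "k = 1")
  case True
  then have empty: "{A \<in> ksubsets U k. a \<in> A \<and> b \<in> A} = {}"
    using ab by (auto simp: ksubsets_def card_Suc_eq)
  show ?thesis
    unfolding empty using True by simp
next
  case False
  then have k2: "2 \<le> k"
    using k by simp
  have "card {a, b} \<le> card U"
    using U ab by (intro card_mono) auto
  then have n: "2 \<le> card U"
    using ab by simp
  have "card {A \<in> ksubsets U k. a \<in> A \<and> b \<in> A} = (card U - 2) choose (k - 2)"
    using card_ksubsets_superset[OF U, of "{a, b}" k] ab k2 by (simp add: numeral_2_eq_2)
  moreover have "real k * (card U choose k) = real (card U) * ((card U - 1) choose (k - 1))"
    using k2 by (intro of_nat_times_binomial_minus1_eq) simp
  moreover have "real (k - 1) * ((card U - 1) choose (k - 1)) = real (card U - 1) * ((card U - 2) choose (k - 2))"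
    using k2 of_nat_times_binomial_minus1_eq[of "k - 1" "card U - 1"] by (simp add: numeral_2_eq_2)
  ultimately have eq: "real k * (real k - 1) * card (ksubsets U k)
      = (real (card U) * (real (card U) - 1)) * card {A \<in> ksubsets U k. a \<in> A \<and> b \<in> A}"
    using U k2 n by (simp add: card_ksubsets of_nat_diff) (metis mult.assoc mult.left_commute)
  have "real (card U) * (real (card U) - 1) \<noteq> 0"
    using n by simp
  then show ?thesis
    unfolding eq by (rule nonzero_mult_div_cancel_left[symmetric])
qed

lemma sum_ksubsets_sum:
  fixes g :: "'a \<Rightarrow> real"
  assumes U: "finite U" and k: "1 \<le> k"
  shows "(\<Sum>A\<in>ksubsets U k. \<Sum>a\<in>A. g a) = real k * card (ksubsets U k) / card U * (\<Sum>a\<in>U. g a)"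
proof -
  have "(\<Sum>A\<in>ksubsets U k. \<Sum>a\<in>A. g a) = (\<Sum>A\<in>ksubsets U k. \<Sum>a\<in>U. if a \<in> A then g a else 0)"
    using U by (intro sum.cong[OF refl]) (simp add: ksubsets_def sum_if_mem_eq_sum_subset)
  also have "\<dots> = (\<Sum>a\<in>U. g a * card {A \<in> ksubsets U k. a \<in> A})"
    using finite_ksubsets[OF U] by (subst sum.swap) (simp add: sum.inter_filter[symmetric] mult.commute)
  also have "\<dots> = (\<Sum>a\<in>U. g a * (real k * card (ksubsets U k) / card U))"
    using real_card_ksubsets_containing[OF U _ k] by simp
  finally show ?thesis
    by (metis sum_distrib_right mult.commute)
qed

lemma sum_ksubsets_sum_squared:
  fixes g :: "'a \<Rightarrow> real"
  assumes U: "finite U" and k: "1 \<le> k"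
  defines "N \<equiv> real (card (ksubsets U k))" and "n \<equiv> real (card U)"
  shows "(\<Sum>A\<in>ksubsets U k. (\<Sum>a\<in>A. g a)^2)
       = N * (k / n * (\<Sum>a\<in>U. (g a)^2) + k * (k - 1) / (n * (n - 1)) * ((\<Sum>a\<in>U. g a)^2 - (\<Sum>a\<in>U. (g a)^2)))"
proof -
  define C1 where "C1 = k * N / n"
  define C2 where "C2 = k * (k - 1) * N / (n * (n - 1))"
  have count: "real (card {A \<in> ksubsets U k. a \<in> A \<and> b \<in> A}) = C2 + (if a = b then C1 - C2 else 0)"
    if "a \<in> U" "b \<in> U" for a b
    using real_card_ksubsets_containing[OF U that(1) k] real_card_ksubsets_containing_pair[OF U that _ k]
    unfolding C1_def C2_def N_def n_def by (cases "a = b") auto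
  have "(\<Sum>A\<in>ksubsets U k. (\<Sum>a\<in>A. g a)^2)
      = (\<Sum>A\<in>ksubsets U k. \<Sum>a\<in>U. \<Sum>b\<in>U. if a \<in> A \<and> b \<in> A then g a * g b else 0)"
  proof (rule sum.cong[OF refl])
    fix A assume "A \<in> ksubsets U k"
    then have "(\<Sum>a\<in>A. g a) = (\<Sum>a\<in>U. if a \<in> A then g a else 0)"
      using U by (simp add: ksubsets_def sum_if_mem_eq_sum_subset)
    then have "(\<Sum>a\<in>A. g a)^2
        = (\<Sum>a\<in>U. \<Sum>b\<in>U. (if a \<in> A then g a else 0) * (if b \<in> A then g b else 0))"
      by (simp add: power2_eq_square sum_product)
    also have "\<dots> = (\<Sum>a\<in>U. \<Sum>b\<in>U. if a \<in> A \<and> b \<in> A then g a * g b else 0)"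
      by (intro sum.cong refl) simp
    finally show "(\<Sum>a\<in>A. g a)^2 = (\<Sum>a\<in>U. \<Sum>b\<in>U. if a \<in> A \<and> b \<in> A then g a * g b else 0)" .
  qed
  also have "\<dots> = (\<Sum>a\<in>U. \<Sum>b\<in>U. g a * g b * card {A \<in> ksubsets U k. a \<in> A \<and> b \<in> A})"
    using finite_ksubsets[OF U]
    by (simp add: sum.swap[where A = "ksubsets U k"] sum.inter_filter[symmetric] mult.commute)
  also have "\<dots> = (\<Sum>a\<in>U. \<Sum>b\<in>U. C2 * (g a * g b) + (if a = b then (C1 - C2) * (g a)^2 else 0))"
    using count by (intro sum.cong refl) (auto simp: algebra_simps power2_eq_square)
  also have "\<dots> = (\<Sum>a\<in>U. C2 * (\<Sum>b\<in>U. g b) * g a + (C1 - C2) * (g a)^2)"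
    using U by (intro sum.cong refl) (simp add: sum.distrib sum_distrib_left[symmetric] mult_ac)
  also have "\<dots> = C2 * (\<Sum>b\<in>U. g b) * (\<Sum>a\<in>U. g a) + (C1 - C2) * (\<Sum>a\<in>U. (g a)^2)"
    by (simp only: sum.distrib sum_distrib_left)
  finally show ?thesis
    unfolding C1_def C2_def by (simp add: algebra_simps power2_eq_square)
qed

lemma sum_ksubsets_centered_sum_squared:
  fixes g :: "'a \<Rightarrow> real"
  assumes U: "finite U" and k: "1 \<le> k" and n: "2 \<le> card U"
  defines "N \<equiv> real (card (ksubsets U k))" and "n \<equiv> real (card U)"
  shows "(\<Sum>A\<in>ksubsets U k. ((\<Sum>a\<in>A. g a) - k / n * (\<Sum>a\<in>U. g a))^2)
       = N * (k * (n - k) / (n * (n - 1))) * ((\<Sum>a\<in>U. (g a)^2) - (\<Sum>a\<in>U. g a)^2 / n)"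
proof -
  define G1 where "G1 = (\<Sum>a\<in>U. g a)"
  define G2 where "G2 = (\<Sum>a\<in>U. (g a)^2)"
  define \<mu> where "\<mu> = k / n * G1"
  have "n \<noteq> 0" "n \<noteq> 1"
    unfolding n_def using n by auto
  have "(\<Sum>A\<in>ksubsets U k. ((\<Sum>a\<in>A. g a) - \<mu>)^2)
      = (\<Sum>A\<in>ksubsets U k. (\<Sum>a\<in>A. g a)^2) - 2 * \<mu> * (\<Sum>A\<in>ksubsets U k. \<Sum>a\<in>A. g a) + N * \<mu>^2"
    unfolding N_def by (simp add: power2_diff sum.distrib sum_subtractf sum_distrib_left algebra_simps)
  also have "\<dots> = N * (k / n * G2 + real k * (real k - 1) / (n * (n - 1)) * (G1^2 - G2))
      - 2 * \<mu> * (k * N / n * G1) + N * \<mu>^2"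
    unfolding sum_ksubsets_sum_squared[OF U k] sum_ksubsets_sum[OF U k]
    by (simp add: N_def n_def G1_def G2_def)
  also have "\<dots> = N * (k * (n - k) / (n * (n - 1))) * (G2 - G1^2 / n)"
    unfolding \<mu>_def using \<open>n \<noteq> 0\<close> \<open>n \<noteq> 1\<close> by (simp add: field_simps power2_eq_square)
  finally show ?thesis
    unfolding \<mu>_def G1_def G2_def .
qed

section \<open>Cores with distinct parts\<close>

lemma distinct_parts_nth_less:
  "distinct_parts l \<Longrightarrow> i < j \<Longrightarrow> j < length l \<Longrightarrow> l ! j < l ! i"
  unfolding distinct_parts_def by (simp add: sorted_wrt_iff_nth_less)

lemma distinct_parts_nth_le_hd:
  "distinct_parts l \<Longrightarrow> i < length l \<Longrightarrow> l ! i \<le> l ! 0"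
  using distinct_parts_nth_less[of l 0 i] by (cases "i = 0") auto

lemma distinct_parts_nth_pos: "distinct_parts l \<Longrightarrow> i < length l \<Longrightarrow> 0 < l ! i"
  unfolding distinct_parts_def is_partition_def by auto

lemma distinct_parts_distinct:
  assumes "distinct_parts l"
  shows "distinct l"
proof -
  have "sorted_wrt (<) (rev l)"
    using assms by (simp add: distinct_parts_def sorted_wrt_rev)
  then show ?thesis
    by (simp add: strict_sorted_iff)
qed

lemma inj_on_set_distinct_parts: "inj_on set {l. distinct_parts l}"
proof (rule inj_onI)
  fix l l' assume "l \<in> {l. distinct_parts l}" "l' \<in> {l. distinct_parts l}" "set l = set l'"
  then have "rev l = rev l'"
    by (intro sorted_distinct_set_unique)
      (auto simp: distinct_parts_def is_partition_def sorted_wrt_rev distinct_parts_distinct)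
  then show "l = l'" by simp
qed

lemma hook_le:
  assumes "distinct_parts l" "i < length l" "j < l ! i"
  shows "hook l i j \<le> l ! 0 + length l - 1"
proof -
  have "card {i'. i < i' \<and> i' < length l \<and> j < l ! i'} \<le> card {i<..<length l}"
    by (rule card_mono) auto
  moreover have "l ! i \<le> l ! 0"
    using distinct_parts_nth_le_hd assms by blast
  ultimately show ?thesis
    unfolding hook_def using assms by simp
qed

lemma descent_by_steps_le_2_hits:
  fixes h :: "nat \<Rightarrow> nat"
  assumes "a \<le> b" "s \<le> h a" "h b < s" "\<And>j. a \<le> j \<Longrightarrow> j < b \<Longrightarrow> h j \<le> h (Suc j) + 2"
  shows "\<exists>j. a \<le> j \<and> j < b \<and> (h j = s \<or> h j = s + 1)"
  using assms
proof (induction "b - a" arbitrary: a)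
  case (Suc d)
  show ?case
  proof (cases "s \<le> h (Suc a)")
    case True
    have "a < b"
      using Suc.prems by (metis le_less not_le)
    have "\<exists>j. Suc a \<le> j \<and> j < b \<and> (h j = s \<or> h j = s + 1)"
      by (rule Suc.hyps(1)) (use Suc.hyps(2) Suc.prems \<open>a < b\<close> True in auto)
    then obtain j where "Suc a \<le> j" "j < b" "h j = s \<or> h j = s + 1"
      by blast
    then show ?thesis
      by (intro exI[of _ j]) auto
  next
    case False
    then show ?thesis
      using Suc.prems Suc.hyps(2) by (intro exI[of _ a]) force
  qed
qed simp

lemma card_larger_parts_le:
  assumes "distinct_parts l"
  shows "card {i'. 0 < i' \<and> i' < length l \<and> j < l ! i'}
     \<le> card {i'. 0 < i' \<and> i' < length l \<and> Suc j < l ! i'} + 1"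
proof -
  have "finite {i'. i' < length l \<and> l ! i' = Suc j}"
    by simp
  then have "card {i'. i' < length l \<and> l ! i' = Suc j} \<le> Suc 0"
    using nth_eq_iff_index_eq[OF distinct_parts_distinct[OF assms]]
    by (subst card_le_Suc0_iff_eq) (auto, metis)
  moreover have "card {i'. 0 < i' \<and> i' < length l \<and> j < l ! i'}
      \<le> card {i'. 0 < i' \<and> i' < length l \<and> Suc j < l ! i'} + card {i'. i' < length l \<and> l ! i' = Suc j}"
    by (intro order_trans[OF card_mono card_Un_le]) auto
  ultimately show ?thesis
    by linarith
qed

text \<open>In the first row the hook lengths run from \<open>\<lambda>\<^sub>1 + k - 1\<close> down to \<open>1\<close> and, the parts being
  distinct, drop by at most \<open>2\<close> per step; so they avoid both \<open>s\<close> and \<open>s + 1\<close> only if all of them are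
  below \<open>s\<close>, i.e. \<open>\<lambda>\<^sub>1 + k \<le> s\<close>, which bounds every hook length.\<close>

lemma distinct_parts_core_iff:
  assumes dp: "distinct_parts l" and len: "length l = k" and k: "1 \<le> k" and s: "2 \<le> s"
  shows "is_core s l \<and> is_core (s + 1) l \<longleftrightarrow> l ! 0 + k \<le> s"
proof
  assume "l ! 0 + k \<le> s"
  then have "hook l i j < s" if "(i, j) \<in> cells l" for i j
    using hook_le[OF dp, of i j] that len k unfolding cells_def by auto
  then show "is_core s l \<and> is_core (s + 1) l"
    using dp unfolding is_core_def distinct_parts_def by fastforce
next
  assume cores: "is_core s l \<and> is_core (s + 1) l"
  show "l ! 0 + k \<le> s"
  proof (rule ccontr)
    assume big: "\<not> l ! 0 + k \<le> s"
    define m where "m = l ! 0"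
    define h where "h j = hook l 0 j" for j
    have m: "0 < m"
      unfolding m_def using distinct_parts_nth_pos[OF dp, of 0] len k by simp
    have "{i'. 0 < i' \<and> i' < length l \<and> 0 < l ! i'} = {0<..<k}"
      using distinct_parts_nth_pos[OF dp] len by auto
    then have h_first: "h 0 = m + (k - 1)"
      unfolding h_def hook_def m_def using m m_def by simp
    have "\<not> m - 1 < l ! i'" if "0 < i'" "i' < length l" for i'
      using distinct_parts_nth_less[OF dp that] unfolding m_def by arith
    then have "{i'. 0 < i' \<and> i' < length l \<and> m - 1 < l ! i'} = {}"
      by blast
    then have h_last: "h (m - 1) = 1"
      unfolding h_def hook_def m_def using m m_def by simp
    have "h j \<le> h (Suc j) + 2" if "j < m - 1" for j
      using card_larger_parts_le[OF dp, of j] that unfolding h_def hook_def m_def by simp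
    moreover have "s \<le> h 0" "h (m - 1) < s"
      using h_first h_last big s unfolding m_def by auto
    ultimately obtain j where j: "j < m - 1" "h j = s \<or> h j = s + 1"
      using descent_by_steps_le_2_hits[of 0 "m - 1" s h] by auto
    then have "(0, j) \<in> cells l"
      unfolding cells_def using len k m_def by auto
    then show False
      using cores j unfolding is_core_def h_def by auto
  qed
qed

lemma set_mem_ksubsets_if_mem_cores_dp:
  assumes l: "l \<in> cores_dp s k" and k: "0 < k" and sk: "2 * k < s"
  shows "set l \<in> ksubsets {1..s - k} k"
proof -
  have dp: "distinct_parts l" and len: "length l = k" and "is_core s l \<and> is_core (s + 1) l"
    using l unfolding cores_dp_def by auto
  then have "l ! 0 + k \<le> s"
    using distinct_parts_core_iff k sk by simp
  then have "set l \<subseteq> {1..s - k}"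
    using distinct_parts_nth_pos[OF dp] distinct_parts_nth_le_hd[OF dp]
    by (fastforce simp: in_set_conv_nth)
  moreover have "card (set l) = k"
    using distinct_parts_distinct[OF dp] len by (simp add: distinct_card)
  ultimately show ?thesis
    unfolding ksubsets_def by auto
qed

lemma rev_sorted_list_mem_cores_dp:
  assumes A: "A \<in> ksubsets {1..s - k} k" and k: "0 < k" and sk: "2 * k < s"
  shows "rev (sorted_list_of_set A) \<in> cores_dp s k"
proof -
  define l where "l = rev (sorted_list_of_set A)"
  have AU: "A \<subseteq> {1..s - k}" and card: "card A = k"
    using A unfolding ksubsets_def by auto
  then have sl: "set l = A" and len: "length l = k"
    unfolding l_def using finite_subset[OF AU] by auto
  have sorted: "sorted_wrt (>) l"
    unfolding l_def by (simp add: sorted_wrt_rev)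
  then have dp: "distinct_parts l"
    using AU sl unfolding distinct_parts_def is_partition_def
    by (auto intro: sorted_wrt_mono_rel[OF _ sorted])
  have "l ! 0 \<in> A"
    using sl len k by (metis nth_mem)
  then have "l ! 0 \<le> s - k"
    using AU by auto
  then have "l ! 0 + k \<le> s"
    using sk by linarith
  then show ?thesis
    unfolding cores_dp_def l_def[symmetric] using distinct_parts_core_iff[OF dp len] dp len k sk by simp
qed

lemma bij_betw_set_cores_dp:
  assumes "0 < k" "2 * k < s"
  shows "bij_betw set (cores_dp s k) (ksubsets {1..s - k} k)"
proof (rule bij_betw_imageI)
  show "inj_on set (cores_dp s k)"
    by (rule inj_on_subset[OF inj_on_set_distinct_parts]) (auto simp: cores_dp_def)
  show "set ` cores_dp s k = ksubsets {1..s - k} k"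
  proof (intro equalityI subsetI)
    show "A \<in> ksubsets {1..s - k} k" if "A \<in> set ` cores_dp s k" for A
      using that set_mem_ksubsets_if_mem_cores_dp assms by blast
    show "A \<in> set ` cores_dp s k" if A: "A \<in> ksubsets {1..s - k} k" for A
    proof -
      have "finite A"
        using A finite_subset unfolding ksubsets_def by blast
      then show ?thesis
        using rev_sorted_list_mem_cores_dp[OF A assms]
        by (intro image_eqI[of A set "rev (sorted_list_of_set A)"]) simp_all
    qed
  qed
qed

lemma psize_eq_sum_set: "distinct_parts l \<Longrightarrow> psize l = \<Sum> (set l)"
  unfolding psize_def by (simp add: distinct_parts_distinct distinct_sum_list_conv_Sum)

lemma sum_cores_dp_psize:
  assumes "0 < k" "2 * k < s"
  shows "(\<Sum>l\<in>cores_dp s k. f (psize l)) = (\<Sum>A\<in>ksubsets {1..s - k} k. f (\<Sum> A))"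
  using sum.reindex_bij_betw[OF bij_betw_set_cores_dp[OF assms], of "\<lambda>A. f (\<Sum> A)"]
  by (simp add: psize_eq_sum_set cores_dp_def)

section \<open>The sum of a random \<open>k\<close>-subset of \<open>{1..n}\<close>\<close>

lemma sum_atLeastAtMost_real: "(\<Sum>a\<in>{1..n}. real a) = real n * (real n + 1) / 2"
  by (induction n) (auto simp: field_simps)

lemma sum_atLeastAtMost_real_squared:
  "(\<Sum>a\<in>{1..n}. (real a)^2) = real n * (real n + 1) * (2 * real n + 1) / 6"
  by (induction n) (auto simp: field_simps power2_eq_square)

lemma sum_atLeastAtMost_real_fourth_le: "(\<Sum>a\<in>{1..n}. ((real a)^2)^2) \<le> real n ^ 5"
proof -
  have "(\<Sum>a\<in>{1..n}. ((real a)^2)^2) \<le> (\<Sum>a\<in>{1..n}. real n ^ 4)"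
    by (intro sum_mono) (auto simp flip: power_mult intro: power_mono)
  also have "\<dots> = real n ^ 5"
    by (simp add: power_Suc[symmetric] del: power_Suc)
  finally show ?thesis .
qed

text \<open>From \<open>|x| \<le> (x\<^sup>2/t + t)/2\<close> with \<open>t = \<surd>V\<close>.\<close>

lemma sum_abs_le_card_mult_sqrt:
  fixes f :: "'a \<Rightarrow> real" and V :: real
  assumes "0 < V" and sq: "(\<Sum>A\<in>K. (f A)^2) \<le> card K * V"
  shows "(\<Sum>A\<in>K. \<bar>f A\<bar>) \<le> card K * sqrt V"
proof -
  define t where "t = sqrt V"
  have t: "0 < t" "t * t = V"
    unfolding t_def using assms(1) by auto
  have "\<bar>x\<bar> \<le> (x^2 / t + t) / 2" for x :: real
  proof -
    have "0 \<le> (\<bar>x\<bar> - t)^2"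
      by simp
    then show ?thesis
      using t by (simp add: field_simps power2_eq_square)
  qed
  then have "(\<Sum>A\<in>K. \<bar>f A\<bar>) \<le> (\<Sum>A\<in>K. ((f A)^2 / t + t) / 2)"
    by (intro sum_mono)
  also have "\<dots> = ((\<Sum>A\<in>K. (f A)^2) / t + card K * t) / 2"
    by (simp add: sum_divide_distrib[symmetric] sum.distrib)
  also have "\<dots> \<le> (card K * V / t + card K * t) / 2"
    using sq t by (simp add: divide_right_mono)
  also have "\<dots> = card K * t"
    using t by (simp add: field_simps)
  finally show ?thesis
    unfolding t_def .
qed

locale random_subset_sum =
  fixes n k :: nat
  assumes k_pos: "0 < k" and k_less_n: "k < n"
begin

definition samples :: "nat set set" where
  "samples = ksubsets {1..n} k"

definition sample_sum :: "nat set \<Rightarrow> real" where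
  "sample_sum A = (\<Sum>a\<in>A. real a)"

definition sample_sq_sum :: "nat set \<Rightarrow> real" where
  "sample_sq_sum A = (\<Sum>a\<in>A. (real a)^2)"

definition mean :: real where
  "mean = real k * (real n + 1) / 2"

definition variance :: real where
  "variance = real k * (real n - real k) * (real n + 1) / 12"

definition W :: "nat set \<Rightarrow> real" where
  "W A = (sample_sum A - mean) / sqrt variance"

lemma n_ge_2: "2 \<le> n"
  using k_pos k_less_n by simp

lemma finite_samples: "finite samples"
  unfolding samples_def by (simp add: finite_ksubsets)

lemma card_samples_pos: "0 < card samples"
  unfolding samples_def using k_less_n by (simp add: card_ksubsets)

lemma samples_nonempty: "samples \<noteq> {}"
  using card_samples_pos by auto

lemma sample_subset: "A \<in> samples \<Longrightarrow> A \<subseteq> {1..n}"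
  and card_sample: "A \<in> samples \<Longrightarrow> card A = k"
  and finite_sample: "A \<in> samples \<Longrightarrow> finite A"
  unfolding samples_def ksubsets_def by (auto intro: finite_subset)

lemma variance_pos: "0 < variance"
  unfolding variance_def using k_pos k_less_n by simp

lemma mean_eq: "mean = real k / real n * (\<Sum>a\<in>{1..n}. real a)"
  unfolding mean_def sum_atLeastAtMost_real using n_ge_2 by (simp add: field_simps)

lemma sum_sample_sum: "(\<Sum>A\<in>samples. sample_sum A) = card samples * mean"
  unfolding samples_def sample_sum_def mean_eq
  using sum_ksubsets_sum[of "{1..n}" k real] k_pos by simp

lemma sum_sample_sum_centered_squared:
  "(\<Sum>A\<in>samples. (sample_sum A - mean)^2) = card samples * variance"
proof -
  have "(\<Sum>A\<in>samples. (sample_sum A - mean)^2)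
      = card samples * (real k * (real n - real k) / (real n * (real n - 1)))
        * ((\<Sum>a\<in>{1..n}. (real a)^2) - (\<Sum>a\<in>{1..n}. real a)^2 / real n)"
    unfolding samples_def sample_sum_def mean_eq
    using sum_ksubsets_centered_sum_squared[of "{1..n}" k real] k_pos n_ge_2 by simp
  also have "(\<Sum>a\<in>{1..n}. (real a)^2) - (\<Sum>a\<in>{1..n}. real a)^2 / real n
      = real n * (real n + 1) * (real n - 1) / 12"
    unfolding sum_atLeastAtMost_real sum_atLeastAtMost_real_squared
    using n_ge_2 by (simp add: field_simps power2_eq_square)
  also have "card samples * (real k * (real n - real k) / (real n * (real n - 1)))
      * (real n * (real n + 1) * (real n - 1) / 12) = card samples * variance"
    unfolding variance_def using n_ge_2 by (simp add: field_simps)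
  finally show ?thesis .
qed

lemma sum_W_squared: "(\<Sum>A\<in>samples. (W A)^2) = card samples"
  unfolding W_def using sum_sample_sum_centered_squared variance_pos
  by (simp add: power_divide sum_divide_distrib[symmetric])

definition moves :: "nat set \<Rightarrow> (nat \<times> nat) set" where
  "moves A = A \<times> ({1..n} - A)"

definition swap_move :: "nat set \<times> nat \<times> nat \<Rightarrow> nat set \<times> nat \<times> nat" where
  "swap_move x = (case x of (A, a, b) \<Rightarrow> (insert b (A - {a}), b, a))"

lemma sample_sum_swap:
  assumes "A \<in> samples" "a \<in> A" "b \<notin> A"
  shows "sample_sum (insert b (A - {a})) = sample_sum A - real a + real b"
  unfolding sample_sum_def using assms finite_sample by (simp add: sum_diff1)

lemma W_swap:
  assumes "A \<in> samples" "(a, b) \<in> moves A"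
  shows "W (fst (swap_move (A, a, b))) - W A = (real b - real a) / sqrt variance"
  using assms sample_sum_swap unfolding W_def moves_def swap_move_def
  by (simp add: diff_divide_distrib[symmetric])

lemma card_moves: "A \<in> samples \<Longrightarrow> card (moves A) = k * (n - k)"
  unfolding moves_def using sample_subset card_sample finite_sample
  by (simp add: card_cartesian_product card_Diff_subset)

lemma sum_moves_jump:
  assumes A: "A \<in> samples"
  shows "(\<Sum>(a, b)\<in>moves A. real b - real a) = - real n * (sample_sum A - mean)"
proof -
  have "(\<Sum>(a, b)\<in>moves A. real b - real a)
      = real k * (\<Sum>b\<in>{1..n} - A. real b) - real (n - k) * sample_sum A"
    unfolding moves_def sample_sum_def using A card_moves[OF A] card_sample[OF A]
      finite_sample[OF A] sample_subset[OF A]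
    by (simp add: sum.cartesian_product[symmetric] sum_subtractf sum_distrib_left card_Diff_subset
        sum_distrib_right mult.commute)
  also have "(\<Sum>b\<in>{1..n} - A. real b) = (\<Sum>b\<in>{1..n}. real b) - sample_sum A"
    unfolding sample_sum_def using sample_subset[OF A] by (simp add: sum_diff)
  also have "real k * ((\<Sum>b\<in>{1..n}. real b) - sample_sum A) - real (n - k) * sample_sum A
      = - real n * (sample_sum A - real k / real n * (\<Sum>b\<in>{1..n}. real b))"
    using k_less_n n_ge_2 by (simp add: of_nat_diff algebra_simps)
  finally show ?thesis
    unfolding mean_eq .
qed

lemma swap_move_mem:
  assumes "x \<in> Sigma samples moves"
  shows "swap_move x \<in> Sigma samples moves" and "swap_move (swap_move x) = x"
proof -
  obtain A a b where x: "x = (A, a, b)" and A: "A \<in> samples" and ab: "(a, b) \<in> moves A"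
    using assms by (cases x rule: prod_cases3) auto
  have "a \<in> A" "b \<in> {1..n}" "b \<notin> A"
    using ab unfolding moves_def by auto
  then have "card (insert b (A - {a})) = k" "insert b (A - {a}) \<subseteq> {1..n}" "a \<in> {1..n}"
    using card_sample[OF A] finite_sample[OF A] sample_subset[OF A] k_pos by (auto simp: card_insert_if)
  then show "swap_move x \<in> Sigma samples moves"
    using x \<open>a \<in> A\<close> \<open>b \<notin> A\<close> unfolding swap_move_def moves_def samples_def ksubsets_def by auto
  have "insert a (insert b (A - {a}) - {b}) = A"
    using \<open>a \<in> A\<close> \<open>b \<notin> A\<close> by auto
  then show "swap_move (swap_move x) = x"
    unfolding x swap_move_def by simp
qed
lemma sum_moves_W_jump:
  assumes A: "A \<in> samples"
  shows "(\<Sum>t\<in>moves A. W (fst (swap_move (A, t))) - W A) = - real n * W A"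
proof -
  have "(\<Sum>t\<in>moves A. W (fst (swap_move (A, t))) - W A)
      = (\<Sum>(a, b)\<in>moves A. (real b - real a) / sqrt variance)"
    using W_swap[OF A] by (intro sum.cong refl) auto
  also have "\<dots> = (\<Sum>(a, b)\<in>moves A. real b - real a) / sqrt variance"
    by (simp add: sum_divide_distrib case_prod_unfold)
  finally show ?thesis
    unfolding sum_moves_jump[OF A] W_def by simp
qed

lemma abs_W_jump_le:
  assumes "x \<in> Sigma samples moves"
  shows "\<bar>W (fst (swap_move x)) - W (fst x)\<bar> \<le> real n / sqrt variance"
proof -
  obtain A a b where x: "x = (A, a, b)" and A: "A \<in> samples" and ab: "(a, b) \<in> moves A"
    using assms by (cases x rule: prod_cases3) auto
  have "a \<le> n" "b \<le> n"
    using ab sample_subset[OF A] unfolding moves_def by auto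
  then have "\<bar>real b - real a\<bar> \<le> real n"
    unfolding abs_le_iff by linarith
  then show ?thesis
    using W_swap[OF A ab] variance_pos unfolding x by (simp add: divide_right_mono)
qed
lemma exchangeable_pair:
  "exchangeable_pair samples moves (k * (n - k)) swap_move W
     (real n / (real k * (real n - real k))) (real n / sqrt variance)"
proof
  show "finite samples" "samples \<noteq> {}"
    by (fact finite_samples samples_nonempty)+
  show "finite (moves A)" if "A \<in> samples" for A
    unfolding moves_def using finite_sample[OF that] by simp
  show "card (moves A) = k * (n - k)" if "A \<in> samples" for A
    using card_moves[OF that] .
  show "0 < k * (n - k)" "0 < real n / (real k * (real n - real k))"
    using k_pos k_less_n by auto
  show "swap_move x \<in> Sigma samples moves" "swap_move (swap_move x) = x"
    and "\<bar>W (fst (swap_move x)) - W (fst x)\<bar> \<le> real n / sqrt variance"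
    if "x \<in> Sigma samples moves" for x
    using swap_move_mem[OF that] abs_W_jump_le[OF that] by auto
  show "(\<Sum>t\<in>moves A. W (fst (swap_move (A, t))) - W A)
      = - (real n / (real k * (real n - real k))) * real (k * (n - k)) * W A" if "A \<in> samples" for A
    using sum_moves_W_jump[OF that] k_pos k_less_n by (simp add: of_nat_diff)
  show "(\<Sum>A\<in>samples. (W A)^2) = card samples"
    by (rule sum_W_squared)
qed

end

lemma le_mult_sqrt_of_sq_le:
  fixes x c y :: real
  assumes "0 \<le> c" "x^2 \<le> c^2 * y"
  shows "x \<le> c * sqrt y"
proof -
  have "x \<le> sqrt (x^2)"
    by simp
  also have "\<dots> \<le> sqrt (c^2 * y)"
    using assms(2) by (rule real_sqrt_le_mono)
  also have "\<dots> = c * sqrt y"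
    using assms(1) by (simp add: real_sqrt_mult)
  finally show ?thesis .
qed

lemma stein_jump_bound_sq_le:
  fixes n P \<sigma> :: real
  assumes "0 < n" "0 < P" "0 < \<sigma>" "\<sigma>^2 = P * (n + 1) / 12"
  shows "(n / \<sigma>)^2 \<le> 12 * (n / P)"
proof -
  have "(n / \<sigma>)^2 = n^2 / \<sigma>^2"
    by (rule power_divide)
  also have "\<dots> \<le> n^2 / (P * n / 12)"
    using assms by (intro divide_left_mono) auto
  also have "\<dots> = 12 * (n / P)"
    using assms by (simp add: power2_eq_square)
  finally show ?thesis .
qed

lemma sqrt_div_variance_le:
  fixes n P \<sigma> :: real
  assumes "0 < n" "0 < P" "0 < \<sigma>" "\<sigma>^2 = P * (n + 1) / 12"
  shows "sqrt (2 * P * n^3) / \<sigma>^2 \<le> 17 * sqrt (n / P)"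
proof (rule le_mult_sqrt_of_sq_le)
  have "(sqrt (2 * P * n^3) / \<sigma>^2)^2 = 2 * P * n^3 / (\<sigma>^2)^2"
    using assms by (simp add: power_divide)
  also have "\<dots> \<le> 2 * P * n^3 / (P * n / 12)^2"
    using assms by (intro divide_left_mono power_mono) auto
  also have "\<dots> = 288 * (n / P)"
    using assms by (simp add: power2_eq_square power3_eq_cube)
  also have "\<dots> \<le> 17^2 * (n / P)"
    using assms(1,2) by (intro mult_right_mono) auto
  finally show "(sqrt (2 * P * n^3) / \<sigma>^2)^2 \<le> 17^2 * (n / P)" .
qed simp

text \<open>With \<open>\<lambda> = n/P\<close> and \<open>\<delta> = n/\<sigma>\<close>, the variance formula gives \<open>\<delta>\<^sup>2 \<le> 12\<lambda>\<close>; every term is then a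
  multiple of \<open>\<surd>\<lambda>\<close>.\<close>

lemma subset_sum_error_terms_le:
  fixes n P \<sigma> :: real
  assumes n: "2 \<le> n" and P: "1 \<le> P" "P \<le> n^2" and \<sigma>: "0 < \<sigma>" "\<sigma>^2 = P * (n + 1) / 12"
  shows "sqrt (2 * P * n^3) / \<sigma>^2 + (n + 1) / \<sigma> + 4 / n + 8 * (n / \<sigma>) + 4 * (n / \<sigma>)^3 / (n / P)
         \<le> 300 * sqrt (n / P)"
proof -
  define lam \<delta> where "lam = n / P" and "\<delta> = n / \<sigma>"
  have pos: "0 < n" "0 < P" "0 < lam" "0 < \<delta>"
    using n P \<sigma> unfolding lam_def \<delta>_def by auto
  have \<delta>_sq: "\<delta>^2 \<le> 12 * lam"
    using stein_jump_bound_sq_le[OF pos(1,2) \<sigma>] unfolding lam_def \<delta>_def .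
  have "12 * lam \<le> (7/2)^2 * lam"
    using pos by (simp add: power2_eq_square)
  then have \<delta>: "\<delta> \<le> 7/2 * sqrt lam"
    using \<delta>_sq by (intro le_mult_sqrt_of_sq_le) auto
  have t1: "sqrt (2 * P * n^3) / \<sigma>^2 \<le> 17 * sqrt lam"
    using sqrt_div_variance_le[OF pos(1,2) \<sigma>] unfolding lam_def .
  have "(n + 1) / \<sigma> \<le> (3/2 * n) / \<sigma>"
    using n \<sigma> by (intro divide_right_mono) auto
  then have t2: "(n + 1) / \<sigma> \<le> 6 * sqrt lam"
    using \<delta> pos unfolding \<delta>_def by simp
  have "n^2 \<le> n^3"
    using n power_increasing[of 2 3 n] by simp
  then have "n / n^3 \<le> lam"
    unfolding lam_def using P pos by (intro divide_left_mono) auto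
  moreover have "n / n^3 = 1 / n^2"
    using pos by (simp add: power2_eq_square power3_eq_cube)
  ultimately have "(4 / n)^2 \<le> 4^2 * lam"
    by (simp add: power_divide)
  then have t3: "4 / n \<le> 4 * sqrt lam"
    by (intro le_mult_sqrt_of_sq_le) auto
  have "4 * \<delta>^3 / lam = 4 * \<delta> * (\<delta>^2 / lam)"
    by (simp add: power2_eq_square power3_eq_cube)
  also have "\<dots> \<le> 4 * \<delta> * 12"
    using \<delta>_sq pos by (intro mult_left_mono) (auto simp: divide_le_eq)
  finally have t45: "8 * \<delta> + 4 * \<delta>^3 / lam \<le> 196 * sqrt lam"
    using \<delta> by linarith
  moreover have "0 \<le> sqrt lam"
    using pos by simp
  ultimately show ?thesis
    using t1 t2 t3 unfolding lam_def \<delta>_def by linarith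
qed

context random_subset_sum
begin

interpretation pair: exchangeable_pair samples moves "k * (n - k)" swap_move W
  "real n / (real k * (real n - real k))" "real n / sqrt variance"
  by (rule exchangeable_pair)

definition swap_sq_sum :: "nat set \<Rightarrow> real" where
  "swap_sq_sum A = (\<Sum>(a, b)\<in>moves A. (real b - real a)^2)"

lemma normalized_jump_sq_eq:
  assumes "A \<in> samples"
  shows "pair.normalized_jump_sq A = swap_sq_sum A / (2 * real n * variance)"
proof -
  have "(\<Sum>t\<in>moves A. (pair.jump (A, t))^2) = (\<Sum>(a, b)\<in>moves A. (real b - real a)^2 / variance)"
    using W_swap[OF assms] variance_pos
    by (intro sum.cong refl) (auto simp: pair.jump_def power_divide)
  moreover have "2 * (real n / (real k * (real n - real k))) * real (k * (n - k)) = 2 * real n"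
    using k_pos k_less_n by (simp add: of_nat_diff)
  ultimately show ?thesis
    unfolding pair.normalized_jump_sq_def swap_sq_sum_def
    by (simp add: sum_divide_distrib case_prod_unfold mult_ac)
qed

lemma swap_sq_sum_eq:
  assumes A: "A \<in> samples"
  shows "swap_sq_sum A = real k * (\<Sum>a\<in>{1..n}. (real a)^2) + (real n - 2 * real k) * sample_sq_sum A
     - 2 * sample_sum A * ((\<Sum>a\<in>{1..n}. real a) - sample_sum A)"
proof -
  have fin: "finite A" and sub: "A \<subseteq> {1..n}"
    using finite_sample[OF A] sample_subset[OF A] .
  have "swap_sq_sum A = (\<Sum>a\<in>A. \<Sum>b\<in>{1..n} - A. (real b - real a)^2)"
    unfolding swap_sq_sum_def moves_def by (simp add: sum.cartesian_product[symmetric])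
  also have "\<dots> = (\<Sum>a\<in>A. ((\<Sum>b\<in>{1..n}. (real b)^2) - sample_sq_sum A)
      - 2 * real a * ((\<Sum>b\<in>{1..n}. real b) - sample_sum A) + real (n - k) * (real a)^2)"
  proof (rule sum.cong[OF refl])
    fix a
    have "(\<Sum>b\<in>{1..n} - A. (real b - real a)^2)
        = (\<Sum>b\<in>{1..n} - A. (real b)^2) - 2 * real a * (\<Sum>b\<in>{1..n} - A. real b)
          + card ({1..n} - A) * (real a)^2"
      by (simp add: power2_diff sum.distrib sum_subtractf sum_distrib_left mult_ac)
    then show "(\<Sum>b\<in>{1..n} - A. (real b - real a)^2) = ((\<Sum>b\<in>{1..n}. (real b)^2) - sample_sq_sum A)
      - 2 * real a * ((\<Sum>b\<in>{1..n}. real b) - sample_sum A) + real (n - k) * (real a)^2"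
      using fin sub card_sample[OF A]
      by (simp add: sum_diff card_Diff_subset sample_sum_def sample_sq_sum_def)
  qed
  also have "\<dots> = real k * ((\<Sum>b\<in>{1..n}. (real b)^2) - sample_sq_sum A)
      - 2 * sample_sum A * ((\<Sum>b\<in>{1..n}. real b) - sample_sum A) + real (n - k) * sample_sq_sum A"
    using card_sample[OF A]
    by (simp add: sum.distrib sum_subtractf sum_distrib_left sum_distrib_right sample_sum_def
        sample_sq_sum_def mult_ac)
  finally show ?thesis
    using k_less_n by (simp add: of_nat_diff algebra_simps)
qed

text \<open>\<open>swap_sq_sum A = 2n\<sigma>\<^sup>2 normalized_jump_sq A\<close> has mean \<open>2n\<sigma>\<^sup>2\<close>; its deviation is expanded in
  \<open>W\<close> and in the centred sum of squares \<open>Q - E Q\<close>, where \<open>E Q = k/n \<Sum>a\<^sup>2\<close>.\<close>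

lemma swap_sq_sum_minus_mean:
  assumes "A \<in> samples"
  shows "swap_sq_sum A - 2 * real n * variance
    = (real n - 2 * real k) * (sample_sq_sum A - real k / real n * (\<Sum>a\<in>{1..n}. (real a)^2))
      - 2 * sqrt variance * ((\<Sum>a\<in>{1..n}. real a) - 2 * mean) * W A
      + 2 * variance * ((W A)^2 - 1)"
proof -
  define G1 G2 where "G1 = (\<Sum>a\<in>{1..n}. real a)" and "G2 = (\<Sum>a\<in>{1..n}. (real a)^2)"
  have S: "sample_sum A = mean + sqrt variance * W A"
    unfolding W_def using variance_pos by simp
  have sq: "sqrt variance * sqrt variance = variance"
    using variance_pos by simp
  have "real k * G2 - 2 * mean * G1 + 2 * mean^2
      = 2 * (real n - 1) * variance - (real n - 2 * real k) * (real k / real n * G2)"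
    unfolding G1_def G2_def sum_atLeastAtMost_real sum_atLeastAtMost_real_squared mean_def variance_def
    using n_ge_2 by (simp add: field_simps power2_eq_square)
  moreover have "swap_sq_sum A - 2 * real n * variance
    - ((real n - 2 * real k) * (sample_sq_sum A - real k / real n * G2)
      - 2 * sqrt variance * (G1 - 2 * mean) * W A + 2 * variance * ((W A)^2 - 1))
    = (real k * G2 - 2 * mean * G1 + 2 * mean^2)
      - (2 * (real n - 1) * variance - (real n - 2 * real k) * (real k / real n * G2))"
    unfolding swap_sq_sum_eq[OF assms] S G1_def[symmetric] G2_def[symmetric]
    using variance_pos by (simp add: algebra_simps power2_eq_square sq)
  ultimately show ?thesis
    unfolding G1_def G2_def by simp
qed

lemma abs_sum_minus_twice_mean_le: "\<bar>(\<Sum>a\<in>{1..n}. real a) - 2 * mean\<bar> \<le> real n * (real n + 1) / 2"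
proof -
  have "(\<Sum>a\<in>{1..n}. real a) - 2 * mean = (real n + 1) * (real n - 2 * real k) / 2"
    unfolding sum_atLeastAtMost_real mean_def by (simp add: field_simps)
  then have "\<bar>(\<Sum>a\<in>{1..n}. real a) - 2 * mean\<bar> = \<bar>(real n + 1) * (real n - 2 * real k) / 2\<bar>"
    by (simp only:)
  also have "\<dots> = (real n + 1) * \<bar>real n - 2 * real k\<bar> / 2"
    by (simp add: abs_mult)
  also have "\<dots> \<le> (real n + 1) * real n / 2"
    using k_less_n by (intro divide_right_mono mult_left_mono) auto
  finally show ?thesis
    by (simp add: mult.commute)
qed

lemma abs_swap_sq_sum_minus_mean_le:
  assumes A: "A \<in> samples"
  shows "\<bar>swap_sq_sum A - 2 * real n * variance\<bar>
    \<le> real n * \<bar>sample_sq_sum A - real k / real n * (\<Sum>a\<in>{1..n}. (real a)^2)\<bar>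
      + sqrt variance * (real n * (real n + 1)) * \<bar>W A\<bar> + 2 * variance * \<bar>(W A)^2 - 1\<bar>"
proof -
  define Q G where "Q = sample_sq_sum A - real k / real n * (\<Sum>a\<in>{1..n}. (real a)^2)" and "G = (\<Sum>a\<in>{1..n}. real a) - 2 * mean"
  have "\<bar>swap_sq_sum A - 2 * real n * variance\<bar>
      \<le> \<bar>(real n - 2 * real k) * Q\<bar> + \<bar>2 * sqrt variance * G * W A\<bar> + \<bar>2 * variance * ((W A)^2 - 1)\<bar>"
    unfolding swap_sq_sum_minus_mean[OF A] Q_def[symmetric] G_def[symmetric]
    by (rule order_trans[OF abs_triangle_ineq add_right_mono[OF abs_triangle_ineq4]])
  also have "\<dots> = \<bar>real n - 2 * real k\<bar> * \<bar>Q\<bar> + 2 * sqrt variance * \<bar>G\<bar> * \<bar>W A\<bar>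
      + 2 * variance * \<bar>(W A)^2 - 1\<bar>"
    using variance_pos by (simp add: abs_mult)
  also have "\<dots> \<le> real n * \<bar>Q\<bar> + sqrt variance * (real n * (real n + 1)) * \<bar>W A\<bar>
      + 2 * variance * \<bar>(W A)^2 - 1\<bar>"
  proof (intro add_mono order_refl)
    have "\<bar>real n - 2 * real k\<bar> \<le> real n"
      using k_less_n by auto
    then show "\<bar>real n - 2 * real k\<bar> * \<bar>Q\<bar> \<le> real n * \<bar>Q\<bar>"
      by (rule mult_right_mono) simp
    have "sqrt variance * (2 * \<bar>G\<bar>) \<le> sqrt variance * (real n * (real n + 1))"
      using abs_sum_minus_twice_mean_le variance_pos unfolding G_def by (intro mult_left_mono) auto
    then have "2 * sqrt variance * \<bar>G\<bar> \<le> sqrt variance * (real n * (real n + 1))"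
      by (simp add: mult_ac)
    then show "2 * sqrt variance * \<bar>G\<bar> * \<bar>W A\<bar> \<le> sqrt variance * (real n * (real n + 1)) * \<bar>W A\<bar>"
      by (rule mult_right_mono) simp
  qed
  finally show ?thesis
    unfolding Q_def .
qed

lemma abs_one_minus_normalized_jump_sq_le:
  assumes A: "A \<in> samples"
  shows "\<bar>1 - pair.normalized_jump_sq A\<bar>
    \<le> (real n * \<bar>sample_sq_sum A - real k / real n * (\<Sum>a\<in>{1..n}. (real a)^2)\<bar>
        + sqrt variance * (real n * (real n + 1)) * \<bar>W A\<bar> + 2 * variance * \<bar>(W A)^2 - 1\<bar>)
       / (2 * real n * variance)"
proof -
  have d: "0 < 2 * real n * variance"
    using n_ge_2 variance_pos by simp
  have "1 - pair.normalized_jump_sq A = - ((swap_sq_sum A - 2 * real n * variance) / (2 * real n * variance))"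
    unfolding normalized_jump_sq_eq[OF A] using n_ge_2 variance_pos by (simp add: diff_divide_distrib)
  then have "\<bar>1 - pair.normalized_jump_sq A\<bar> = \<bar>swap_sq_sum A - 2 * real n * variance\<bar> / (2 * real n * variance)"
    using d by (simp add: abs_divide)
  then show ?thesis
    using abs_swap_sq_sum_minus_mean_le[OF A] d by (simp add: divide_right_mono)
qed

lemma sum_sample_sq_sum_centered_squared_le:
  "(\<Sum>A\<in>samples. (sample_sq_sum A - real k / real n * (\<Sum>a\<in>{1..n}. (real a)^2))^2)
     \<le> card samples * (2 * (real k * (real n - real k)) * real n^3)"
proof -
  define c where "c = real k * (real n - real k) / (real n * (real n - 1))"
  have c: "0 \<le> c"
    unfolding c_def using k_less_n n_ge_2 by simp
  have "(\<Sum>A\<in>samples. (sample_sq_sum A - real k / real n * (\<Sum>a\<in>{1..n}. (real a)^2))^2)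
      = card samples * c * ((\<Sum>a\<in>{1..n}. ((real a)^2)^2) - (\<Sum>a\<in>{1..n}. (real a)^2)^2 / real n)"
    unfolding samples_def sample_sq_sum_def c_def
    using sum_ksubsets_centered_sum_squared[of "{1..n}" k "\<lambda>a. (real a)^2"] k_pos n_ge_2 by simp
  also have "\<dots> \<le> card samples * c * real n ^ 5"
  proof (intro mult_left_mono)
    have "0 \<le> (\<Sum>a\<in>{1..n}. (real a)^2)^2 / real n"
      by simp
    then show "(\<Sum>a\<in>{1..n}. ((real a)^2)^2) - (\<Sum>a\<in>{1..n}. (real a)^2)^2 / real n \<le> real n ^ 5"
      using sum_atLeastAtMost_real_fourth_le[of n] by linarith
  qed (use c in auto)
  also have "c * real n ^ 5 \<le> 2 * (real k * (real n - real k)) * real n^3"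
  proof -
    have n: "real n \<noteq> 0" "real n - 1 \<noteq> 0" "0 < real n - 1"
      using n_ge_2 by auto
    have "real n ^ 5 = real n * (real n * real n ^ 3)"
      by (simp add: numeral_eq_Suc)
    then have "c * real n ^ 5 = real k * (real n - real k) * (real n * real n ^ 3) / (real n - 1)"
      unfolding c_def using n by (simp add: field_simps)
    also have "\<dots> \<le> real k * (real n - real k) * (2 * (real n - 1) * real n ^ 3) / (real n - 1)"
      using n_ge_2 k_less_n n by (intro divide_right_mono mult_left_mono mult_right_mono) auto
    also have "\<dots> = 2 * (real k * (real n - real k)) * real n^3"
      using n by (simp add: field_simps)
    finally show ?thesis .
  qed
  then have "card samples * c * real n ^ 5 \<le> card samples * (2 * (real k * (real n - real k)) * real n^3)"
    by (simp add: mult.assoc mult_left_mono)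
  finally show ?thesis .
qed

lemma sum_abs_one_minus_normalized_jump_sq_le:
  "(\<Sum>A\<in>samples. \<bar>1 - pair.normalized_jump_sq A\<bar>)
    \<le> card samples * (real n * sqrt (2 * (real k * (real n - real k)) * real n^3)
        + sqrt variance * (real n * (real n + 1)) + 4 * variance) / (2 * real n * variance)"
proof -
  define Q where "Q A = sample_sq_sum A - real k / real n * (\<Sum>a\<in>{1..n}. (real a)^2)" for A
  have d: "0 < 2 * real n * variance"
    using n_ge_2 variance_pos by simp
  have sum_Q: "(\<Sum>A\<in>samples. \<bar>Q A\<bar>) \<le> card samples * sqrt (2 * (real k * (real n - real k)) * real n^3)"
    using sum_abs_le_card_mult_sqrt[OF _ sum_sample_sq_sum_centered_squared_le] k_pos k_less_n
    unfolding Q_def by simp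
  have sum_W: "(\<Sum>A\<in>samples. \<bar>(W A)^2 - 1\<bar>) \<le> 2 * card samples"
  proof -
    have "(\<Sum>A\<in>samples. \<bar>(W A)^2 - 1\<bar>) \<le> (\<Sum>A\<in>samples. (W A)^2 + 1)"
      by (intro sum_mono) (simp add: abs_le_iff)
    then show ?thesis
      using sum_W_squared by (simp add: sum.distrib)
  qed
  have "(\<Sum>A\<in>samples. \<bar>1 - pair.normalized_jump_sq A\<bar>)
      \<le> (\<Sum>A\<in>samples. (real n * \<bar>Q A\<bar> + sqrt variance * (real n * (real n + 1)) * \<bar>W A\<bar>
          + 2 * variance * \<bar>(W A)^2 - 1\<bar>) / (2 * real n * variance))"
    unfolding Q_def by (intro sum_mono abs_one_minus_normalized_jump_sq_le)
  also have "\<dots> = (real n * (\<Sum>A\<in>samples. \<bar>Q A\<bar>) + sqrt variance * (real n * (real n + 1)) * (\<Sum>A\<in>samples. \<bar>W A\<bar>)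
      + 2 * variance * (\<Sum>A\<in>samples. \<bar>(W A)^2 - 1\<bar>)) / (2 * real n * variance)"
    by (simp add: sum_divide_distrib[symmetric] sum.distrib sum_distrib_left)
  also have "\<dots> \<le> (real n * (card samples * sqrt (2 * (real k * (real n - real k)) * real n^3))
      + sqrt variance * (real n * (real n + 1)) * card samples + 2 * variance * (2 * card samples))
      / (2 * real n * variance)"
    using d sum_Q pair.sum_abs_W_le sum_W variance_pos
    by (intro divide_right_mono add_mono mult_left_mono) auto
  finally show ?thesis
    by (simp add: algebra_simps)
qed

theorem kolmogorov_distance_le:
  "\<bar>real (card {A\<in>samples. W A \<le> x}) / card samples - Phi x\<bar>
     \<le> 300 * sqrt (real n / (real k * (real n - real k)))"
proof -
  define P where "P = real k * (real n - real k)"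
  define \<sigma> where "\<sigma> = sqrt variance"
  have \<sigma>: "0 < \<sigma>" "variance = \<sigma>^2"
    unfolding \<sigma>_def using variance_pos by auto
  have "1 \<le> real k" "1 \<le> real n - real k" "real k \<le> real n" "real n - real k \<le> real n"
    using k_pos k_less_n by auto
  then have P: "1 \<le> P" "P \<le> (real n)^2"
    unfolding P_def power2_eq_square using mult_mono[of 1 "real k" 1 "real n - real k"]
    by (auto intro: mult_mono)
  have "2 * (\<Sum>A\<in>samples. \<bar>1 - pair.normalized_jump_sq A\<bar>) / card samples
      \<le> 2 * (card samples * (real n * sqrt (2 * P * real n^3) + \<sigma> * (real n * (real n + 1))
          + 4 * \<sigma>^2) / (2 * real n * \<sigma>^2)) / card samples"
    using sum_abs_one_minus_normalized_jump_sq_le[unfolded \<sigma>_def[symmetric], unfolded \<sigma>(2)]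
      card_samples_pos
    unfolding P_def by (intro divide_right_mono mult_left_mono) auto
  also have "\<dots> = sqrt (2 * P * real n^3) / \<sigma>^2 + (real n + 1) / \<sigma> + 4 / real n"
    using card_samples_pos n_ge_2 \<sigma>(1) by (simp add: field_simps power2_eq_square)
  finally have "\<bar>real (card {A\<in>samples. W A \<le> x}) / card samples - Phi x\<bar>
      \<le> sqrt (2 * P * real n^3) / \<sigma>^2 + (real n + 1) / \<sigma> + 4 / real n
        + 8 * (real n / \<sigma>) + 4 * (real n / \<sigma>)^3 / (real n / P)"
    using pair.kolmogorov_bound[of x] unfolding P_def \<sigma>_def by linarith
  also have "\<dots> \<le> 300 * sqrt (real n / P)"
    using n_ge_2 P \<sigma> unfolding P_def variance_def
    by (intro subset_sum_error_terms_le) auto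
  finally show ?thesis
    unfolding P_def .
qed

end

section \<open>Sizes of cores\<close>

lemma card_filter_cores_dp_psize:
  assumes "0 < k" "2 * k < s"
  shows "card {l \<in> cores_dp s k. Q (psize l)} = card {A \<in> ksubsets {1..s - k} k. Q (\<Sum> A)}"
proof -
  have fin: "finite (cores_dp s k)" "finite (ksubsets {1..s - k} k)"
    using bij_betw_finite[OF bij_betw_set_cores_dp[OF assms]] finite_ksubsets[of "{1..s - k}" k] by auto
  have "card {l \<in> cores_dp s k. Q (psize l)} = (\<Sum>l\<in>cores_dp s k. if Q (psize l) then 1 else 0)"
    using fin(1) by (simp add: sum.inter_filter[symmetric])
  also have "\<dots> = (\<Sum>A\<in>ksubsets {1..s - k} k. if Q (\<Sum> A) then 1 else 0)"
    by (rule sum_cores_dp_psize[OF assms])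
  also have "\<dots> = card {A \<in> ksubsets {1..s - k} k. Q (\<Sum> A)}"
    using fin(2) by (simp add: sum.inter_filter[symmetric])
  finally show ?thesis .
qed

lemma std_cdf_eq_subset_sum_cdf:
  assumes "0 < k" "2 * k < s"
  shows "std_cdf s k x = real (card {A \<in> random_subset_sum.samples (s - k) k. random_subset_sum.W (s - k) k A \<le> x})
      / card (random_subset_sum.samples (s - k) k)"
proof -
  interpret random_subset_sum "s - k" k
    using assms by unfold_locales auto
  have real_sum: "real (\<Sum> A) = sample_sum A" for A
    by (simp add: sample_sum_def)
  have card: "card (cores_dp s k) = card samples"
    using card_filter_cores_dp_psize[OF assms, of "\<lambda>_. True"] unfolding samples_def by simp
  have sums: "(\<Sum>l\<in>cores_dp s k. f (real (psize l))) = (\<Sum>A\<in>samples. f (sample_sum A))" for f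
    using sum_cores_dp_psize[OF assms, of "\<lambda>p. f (real p)"] unfolding samples_def real_sum .
  have mu: "mu s k = mean"
    unfolding mu_def using sums[of "\<lambda>x. x"] sum_sample_sum card card_samples_pos by simp
  have sigma: "sigma s k = sqrt variance"
    unfolding sigma_def var_def mu sums[of "\<lambda>x. (x - mean)^2"]
    using sum_sample_sum_centered_squared card card_samples_pos by simp
  show ?thesis
    unfolding std_cdf_def mu sigma card
    using card_filter_cores_dp_psize[OF assms, of "\<lambda>p. (real p - mean) / sqrt variance \<le> x"]
    by (simp add: samples_def sample_sum_def W_def)
qed

theorem kolmogorov_distance_cores_le:
  assumes "0 < k" "2 * k < s"
  shows "\<bar>std_cdf s k x - Phi x\<bar> \<le> 300 * sqrt (real (s - k) / (real k * (real s - 2 * real k)))"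
proof -
  interpret random_subset_sum "s - k" k
    using assms by unfold_locales auto
  have "real (s - k) - real k = real s - 2 * real k"
    using assms by (simp add: of_nat_diff)
  then show ?thesis
    using kolmogorov_distance_le[of x] unfolding std_cdf_eq_subset_sum_cdf[OF assms] by simp
qed

lemma sqrt_div_le_powr_div:
  fixes a b :: real
  assumes "0 < a" "0 < b" "b \<le> a^2"
  shows "sqrt (a / b) \<le> a powr (5/2) / b powr (3/2)"
proof -
  have "a powr (5/2) = a powr 2 * a powr (1/2)"
    by (simp add: powr_add[symmetric])
  also have "\<dots> = a^2 * sqrt a"
    using assms(1) by (simp add: powr_half_sqrt)
  finally have "a powr (5/2) = a^2 * sqrt a" .
  moreover have "b powr (3/2) = b * sqrt b"
    using assms(2) powr_add[of b 1 "1/2"] by (simp add: powr_half_sqrt)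
  moreover have "sqrt (a / b) = 1 * (sqrt a / sqrt b)"
    by (simp add: real_sqrt_divide)
  moreover have "1 * (sqrt a / sqrt b) \<le> (a^2 / b) * (sqrt a / sqrt b)"
    using assms by (intro mult_right_mono) auto
  ultimately show ?thesis
    using assms by (simp add: field_simps)
qed

lemma filterlim_at_top_of_mult_le_one:
  fixes f g :: "nat \<Rightarrow> real"
  assumes "filterlim (\<lambda>n. f n * g n) at_top sequentially"
    and "eventually (\<lambda>n. 0 < g n \<and> g n \<le> 1) sequentially"
  shows "filterlim f at_top sequentially"
proof (rule filterlim_at_top_mono[OF assms(1)])
  have "eventually (\<lambda>n. 0 < f n * g n) sequentially"
    using assms(1) by (simp add: filterlim_at_top_dense)
  then show "\<forall>\<^sub>F n in sequentially. f n * g n \<le> f n"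
    using assms(2) by eventually_elim (auto simp: zero_less_mult_iff intro: mult_right_le_one_le)
qed

theorem tendsto_std_cdf_Phi:
  assumes k: "filterlim (\<lambda>n. real (ks n)) at_top sequentially"
    and d: "filterlim (\<lambda>n. real (ss n) - 2 * real (ks n)) at_top sequentially"
  shows "(\<lambda>n. std_cdf (ss n) (ks n) x) \<longlonglongrightarrow> Phi x"
proof -
  have "eventually (\<lambda>n. 0 < real (ks n)) sequentially"
    "eventually (\<lambda>n. 0 < real (ss n) - 2 * real (ks n)) sequentially"
    using k d unfolding filterlim_at_top_dense by blast+
  then have bound: "eventually (\<lambda>n. norm (std_cdf (ss n) (ks n) x - Phi x)
      \<le> 300 * sqrt (inverse (real (ks n)) + inverse (real (ss n) - 2 * real (ks n)))) sequentially"
  proof eventually_elim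
    case (elim n)
    then have "real (2 * ks n) < real (ss n)"
      by simp
    then have "2 * ks n < ss n"
      by (simp only: of_nat_less_iff)
    moreover have "0 < ks n"
      using elim(1) by simp
    moreover have "real (ss n - ks n) / (real (ks n) * (real (ss n) - 2 * real (ks n)))
        = inverse (real (ks n)) + inverse (real (ss n) - 2 * real (ks n))"
      using elim \<open>2 * ks n < ss n\<close> by (simp add: of_nat_diff field_simps)
    ultimately show ?case
      using kolmogorov_distance_cores_le[of "ks n" "ss n" x] by simp
  qed
  have "(\<lambda>n. 300 * sqrt (inverse (real (ks n)) + inverse (real (ss n) - 2 * real (ks n))))
      \<longlonglongrightarrow> 300 * sqrt (0 + 0)"
    by (intro tendsto_intros tendsto_inverse_0_at_top k d)
  then have "(\<lambda>n. std_cdf (ss n) (ks n) x - Phi x) \<longlonglongrightarrow> 0"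
    by (intro Lim_null_comparison[OF bound]) simp
  then show ?thesis
    by (simp add: LIM_zero_iff)
qed

lemma kolmogorov_distance_cores_le_powr:
  assumes sk: "0 < k" "2 * k < s"
  shows "\<bar>std_cdf s k x - Phi x\<bar> \<le> 12 powr (3/2) * 300 * real (s - k) powr (5/2)
      / (real k * (real s - 2 * real k)) powr (3/2)"
proof -
  define a b where "a = real (s - k)" and "b = real k * (real s - 2 * real k)"
  have ab: "0 < a" "0 < b"
    unfolding a_def b_def using sk by auto
  have "b \<le> a^2"
    unfolding a_def b_def power2_eq_square using sk by (intro mult_mono) (auto simp: of_nat_diff)
  then have "300 * sqrt (a / b) \<le> 300 * (a powr (5/2) / b powr (3/2))"
    using ab by (intro mult_left_mono sqrt_div_le_powr_div) auto
  also have "\<dots> \<le> 12 powr (3/2) * (300 * (a powr (5/2) / b powr (3/2)))"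
  proof -
    have "(1::real) \<le> 12 powr (3/2)"
      by (rule ge_one_powr_ge_zero) auto
    then have "1 * (300 * (a powr (5/2) / b powr (3/2))) \<le> 12 powr (3/2) * (300 * (a powr (5/2) / b powr (3/2)))"
      by (rule mult_right_mono) simp
    then show ?thesis
      by simp
  qed
  finally show ?thesis
    using kolmogorov_distance_cores_le[of k s x] sk unfolding a_def b_def by (simp add: mult.assoc)
qed

lemma tendsto_std_cdf_Phi_scaled:
  assumes "filterlim ss at_top sequentially"
    and k: "filterlim (\<lambda>n. real (ks n) * real (ss n) powr (-2/3)) at_top sequentially"
    and d: "filterlim (\<lambda>n. (real (ss n) - 2 * real (ks n)) * real (ss n) powr (-2/3)) at_top sequentially"
  shows "(\<lambda>n. std_cdf (ss n) (ks n) x) \<longlonglongrightarrow> Phi x"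
proof -
  have "eventually (\<lambda>n. 1 \<le> ss n) sequentially"
    using assms(1) unfolding filterlim_at_top by blast
  then have small: "eventually (\<lambda>n. 0 < real (ss n) powr (-2/3) \<and> real (ss n) powr (-2/3) \<le> 1) sequentially"
  proof eventually_elim
    case (elim n)
    have "real (ss n) powr (-2/3) \<le> real (ss n) powr 0"
      using elim by (intro powr_mono) auto
    then show ?case
      using elim by simp
  qed
  have "filterlim (\<lambda>n. real (ks n)) at_top sequentially"
    by (rule filterlim_at_top_of_mult_le_one[OF k small])
  moreover have "filterlim (\<lambda>n. real (ss n) - 2 * real (ks n)) at_top sequentially"
    by (rule filterlim_at_top_of_mult_le_one[OF d small])
  ultimately show ?thesis
    by (rule tendsto_std_cdf_Phi)
qed

theorem corollary3:
  shows "(\<exists>K::real. \<forall>s k. 0 < s \<and> 0 < k \<and> 2 * k < s \<longrightarrow>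
            (\<forall>x. \<bar>std_cdf s k x - Phi x\<bar>
                 \<le> 12 powr (3/2) * K * real (s - k) powr (5/2)
                    / (real k * (real s - 2 * real k)) powr (3/2)))
       \<and> (\<forall>(ss::nat \<Rightarrow> nat) (ks::nat \<Rightarrow> nat).
            filterlim ss at_top sequentially \<and>
            filterlim (\<lambda>n. real (ks n) * real (ss n) powr (-2/3)) at_top sequentially \<and>
            filterlim (\<lambda>n. (real (ss n) - 2 * real (ks n)) * real (ss n) powr (-2/3)) at_top sequentially
            \<longrightarrow> (\<forall>x. (\<lambda>n. std_cdf (ss n) (ks n) x) \<longlonglongrightarrow> Phi x))"
proof (intro conjI exI[of _ 300] allI impI)
  show "\<bar>std_cdf s k x - Phi x\<bar> \<le> 12 powr (3/2) * 300 * real (s - k) powr (5/2)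
      / (real k * (real s - 2 * real k)) powr (3/2)" if "0 < s \<and> 0 < k \<and> 2 * k < s" for s k x
    using that kolmogorov_distance_cores_le_powr by blast
  show "(\<lambda>n. std_cdf (ss n) (ks n) x) \<longlonglongrightarrow> Phi x"
    if "filterlim ss at_top sequentially \<and>
      filterlim (\<lambda>n. real (ks n) * real (ss n) powr (-2/3)) at_top sequentially \<and>
      filterlim (\<lambda>n. (real (ss n) - 2 * real (ks n)) * real (ss n) powr (-2/3)) at_top sequentially"
    for ss ks :: "nat \<Rightarrow> nat" and x
    using that tendsto_std_cdf_Phi_scaled by blast
qed

end
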